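(* Let $(A,B)$ be an admissible pair of $n\times n$ complex matrices and put $r_A=\mathrm{rank}(A)$, $r_B=\mathrm{rank}(B)$. Then $m:=r_A+r_B-n\ge 0$, and there exists a permutation $\Pi$ of $\{1,\dots,n\}$ such that the boundary condition $A\Psi+B\Psi'=0$ is equivalent (i.e. has exactly the same solution pairs $(\Psi,\Psi')\in\mathbb C^n\times\mathbb C^n$) to the PQRS-form condition $$B_{PQRS}\tilde\Psi'=A_{PQRS}\tilde\Psi,\qquad \tilde\Psi=(\psi_{\Pi(1)}(0),\dots,\psi_{\Pi(n)}(0))^T,\ \tilde\Psi'=(\psi'_{\Pi(1)}(0),\dots,\psi'_{\Pi(n)}(0))^T,$$ for some matrices $P\in\mathbb C^{m\times(n-r_B)}$, $Q\in\mathbb C^{(n-r_A)\times(n-r_B)}$, $R\in\mathbb C^{(n-r_A)\times m}$ and some invertible self-adjoint $S\in\mathbb C^{m\times m}$. For a given admissible permutation $\Pi$, the matrices $P,Q,R,S$ (with $S$ invertible self-adjoint) are uniquely determined; choosing the lexicographically smallest admissible $\Pi$ makes the representation unique.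
   Context: A vertex coupling at a vertex of degree $n$ of a quantum graph is given by boundary conditions $A\Psi+B\Psi'=0$, where $A,B\in\mathbb C^{n\times n}$ and $\Psi=(\psi_1(0),\dots,\psi_n(0))^T$, $\Psi'=(\psi_1'(0),\dots,\psi_n'(0))^T$ are the vectors of boundary values and boundary derivatives of the wave function on the $n$ edges at the vertex. The pair $(A,B)$ is called admissible if the $n\times 2n$ matrix $(A|B)$ has rank $n$ and $AB^*$ is self-adjoint. $I^{(j)}$ denotes the $j\times j$ identity matrix. With $m=r_A+r_B-n$, $a=n-r_A$, $b=n-r_B$, $S\in\mathbb C^{m\times m}$ self-adjoint, $P\in\mathbb C^{m\times b}$, $Q\in\mathbb C^{a\times b}$, $R\in\mathbb C^{a\times m}$, define the $n\times n$ block matrices (block sizes $m,a,b$) $$B_{PQRS}=\begin{pmatrix} I^{(m)} & 0 & P\\ R & I^{(a)} & Q\\ 0&0&0\end{pmatrix},\qquad A_{PQRS}=\begin{pmatrix} S & -SR^* & 0\\ 0&0&0\\ -P^* & (RP-Q)^* & I^{(b)}\end{pmatrix}.$$ *)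

theory Defs
  imports "Jordan_Normal_Form.Schur_Decomposition" "Jordan_Normal_Form.DL_Rank"
begin

definition hcat :: "'a mat \<Rightarrow> 'a mat \<Rightarrow> 'a mat" where
  "hcat A B = mat (dim_row A) (dim_col A + dim_col B)
     (\<lambda>(i,j). if j < dim_col A then A $$ (i,j) else B $$ (i, j - dim_col A))"

definition admissible :: "nat \<Rightarrow> complex mat \<Rightarrow> complex mat \<Rightarrow> bool" where
  "admissible n A B \<longleftrightarrow> A \<in> carrier_mat n n \<and> B \<in> carrier_mat n n \<and>
     vec_space.rank n (hcat A B) = n \<and>
     mat_adjoint (A * mat_adjoint B) = A * mat_adjoint B"

definition blk_idx :: "nat \<Rightarrow> nat \<Rightarrow> nat \<Rightarrow> nat \<times> nat" where
  "blk_idx m a i = (if i < m then (0, i) else if i < m + a then (1, i - m) else (2, i - m - a))"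

text \<open>3x3 block matrix with block sizes m, a, b (rows and columns); Ms ! k ! l is block (k,l).\<close>
definition block3 :: "nat \<Rightarrow> nat \<Rightarrow> nat \<Rightarrow> 'a mat list list \<Rightarrow> 'a mat" where
  "block3 m a b Ms = mat (m + a + b) (m + a + b)
     (\<lambda>(i,j). case blk_idx m a i of (bi, i') \<Rightarrow> case blk_idx m a j of (bj, j') \<Rightarrow>
        (Ms ! bi ! bj) $$ (i', j'))"

definition B_PQRS :: "nat \<Rightarrow> nat \<Rightarrow> nat \<Rightarrow> complex mat \<Rightarrow> complex mat \<Rightarrow> complex mat \<Rightarrow> complex mat" where
  "B_PQRS m a b P Q R = block3 m a b
     [[1\<^sub>m m, 0\<^sub>m m a, P],
      [R, 1\<^sub>m a, Q],
      [0\<^sub>m b m, 0\<^sub>m b a, 0\<^sub>m b b]]"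

definition A_PQRS :: "nat \<Rightarrow> nat \<Rightarrow> nat \<Rightarrow> complex mat \<Rightarrow> complex mat \<Rightarrow> complex mat \<Rightarrow> complex mat \<Rightarrow> complex mat" where
  "A_PQRS m a b P Q R S = block3 m a b
     [[S, - (S * mat_adjoint R), 0\<^sub>m m b],
      [0\<^sub>m a m, 0\<^sub>m a a, 0\<^sub>m a b],
      [- (mat_adjoint P), mat_adjoint (R * P - Q), 1\<^sub>m b]]"

definition perm_vec :: "(nat \<Rightarrow> nat) \<Rightarrow> 'a vec \<Rightarrow> 'a vec" where
  "perm_vec p v = vec (dim_vec v) (\<lambda>i. v $ p i)"

definition PQRS_equiv :: "nat \<Rightarrow> complex mat \<Rightarrow> complex mat \<Rightarrow> (nat \<Rightarrow> nat) \<Rightarrow> nat \<Rightarrow> nat \<Rightarrow> nat \<Rightarrow>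
    complex mat \<Rightarrow> complex mat \<Rightarrow> complex mat \<Rightarrow> complex mat \<Rightarrow> bool" where
  "PQRS_equiv n A B p m a b P Q R S \<longleftrightarrow>
     (\<forall>\<Psi> \<in> carrier_vec n. \<forall>\<Psi>' \<in> carrier_vec n.
        (A *\<^sub>v \<Psi> + B *\<^sub>v \<Psi>' = 0\<^sub>v n) \<longleftrightarrow>
        (B_PQRS m a b P Q R *\<^sub>v perm_vec p \<Psi>' = A_PQRS m a b P Q R S *\<^sub>v perm_vec p \<Psi>))"

definition PQRS_ok :: "nat \<Rightarrow> nat \<Rightarrow> nat \<Rightarrow> complex mat \<Rightarrow> complex mat \<Rightarrow> complex mat \<Rightarrow> complex mat \<Rightarrow> bool" where
  "PQRS_ok m a b P Q R S \<longleftrightarrow> P \<in> carrier_mat m b \<and> Q \<in> carrier_mat a b \<and> R \<in> carrier_mat a m \<and>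
     S \<in> carrier_mat m m \<and> mat_adjoint S = S \<and> invertible_mat S"

end

theory Submission
  imports Defs
begin

(*
  Choose a set J12 of rB column indices of B whose columns form a basis
  of the column space of B, and let N take the columns of B on J12 and those of A
  elsewhere.  Admissibility (rank (A|B) = n, A B^* self-adjoint) forces N to be
  invertible, and multiplying A Psi + B Psi' = 0 by C = N^-1 turns the columns of B
  on J12 and those of A on J3 = {..<n} - J12 into unit vectors.  Extending J3 to a
  column basis of A yields J1 (so card J1 = rA + rB - n, in particular rA + rB >= n)
  and J2 = J12 - J1.  Listing the coordinates in the order J1, J2, J3 by a
  permutation p, the entries f = CA and g = CB (in permuted coordinates) satisfy the
  axioms of the locale pqrs_normalised.  Inside that locale P, Q, R, S are read off
  from f and g, S is shown self-adjoint and invertible, and one invertible row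
  operation transforms the system f u + g u' = 0 into the PQRS system.

  The PQRS system is written out block row by block row; evaluating two
  PQRS systems with the same solution set on explicit test vectors shows that they
  have the same S, P, R S (hence the same R, as S is invertible) and Q.
*)

section \<open>Index-level facts about matrices\<close>

lemma sum_lessThan_add: "(\<Sum>k<x+(y::nat). f k) = (\<Sum>k<x. f k) + (\<Sum>k<y. f (x+k))"
  by (induction y) (auto simp: add.assoc)

lemma sum_delta_mult:
  "finite A \<Longrightarrow> (\<Sum>l\<in>A. h l * (if l = j then 1 else (0::'a::semiring_1))) = (if j \<in> A then h j else 0)"
  by (simp add: if_distrib sum.delta' cong: if_cong)

lemma sum_delta_mult':
  "finite A \<Longrightarrow> (\<Sum>l\<in>A. h l * (if j = l then 1 else (0::'a::semiring_1))) = (if j \<in> A then h j else 0)"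
  by (simp add: if_distrib sum.delta cong: if_cong)

lemma mat_vec_index: "A \<in> carrier_mat nr nc \<Longrightarrow> v \<in> carrier_vec nc \<Longrightarrow> i < nr \<Longrightarrow>
   (A *\<^sub>v v) $ i = (\<Sum>j<nc. A $$ (i,j) * v $ j)"
  by (auto simp: mult_mat_vec_def scalar_prod_def atLeast0LessThan intro!: sum.cong)

lemma mat_mult_index: "A \<in> carrier_mat nr n \<Longrightarrow> B \<in> carrier_mat n nc \<Longrightarrow> i < nr \<Longrightarrow> j < nc \<Longrightarrow>
   (A * B) $$ (i,j) = (\<Sum>k<n. A $$ (i,k) * B $$ (k,j))"
  by (auto simp: scalar_prod_def atLeast0LessThan intro!: sum.cong)

lemma adj_dims[simp]: "dim_row (mat_adjoint M) = dim_col M" "dim_col (mat_adjoint M) = dim_row M"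
  by (simp_all add: mat_adjoint_def mat_of_rows_def)

lemma adj_index[simp]:
  "i < dim_col M \<Longrightarrow> j < dim_row M \<Longrightarrow> mat_adjoint M $$ (i,j) = conjugate (M $$ (j,i))"
  unfolding mat_adjoint_def mat_of_rows_def by simp

lemma adj_carrier: "M \<in> carrier_mat r c \<Longrightarrow> mat_adjoint M \<in> carrier_mat c r"
  by auto

lemma adj_adj: "mat_adjoint (mat_adjoint (M :: complex mat)) = M"
  by (rule eq_matI) auto

lemma adj_mult:
  assumes X: "(X :: complex mat) \<in> carrier_mat r k" and Y: "Y \<in> carrier_mat k c"
  shows "mat_adjoint (X * Y) = mat_adjoint Y * mat_adjoint X"
proof (rule eq_matI)
  fix i j assume "i < dim_row (mat_adjoint Y * mat_adjoint X)" "j < dim_col (mat_adjoint Y * mat_adjoint X)"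
  hence i: "i < c" and j: "j < r" using X Y by auto
  have "mat_adjoint (X * Y) $$ (i,j) = cnj (\<Sum>l<k. X $$ (j,l) * Y $$ (l,i))"
    using mat_mult_index[OF X Y j i] i j X Y by simp
  also have "\<dots> = (\<Sum>l<k. mat_adjoint Y $$ (i,l) * mat_adjoint X $$ (l,j))"
    using X Y i j by (simp add: mult.commute)
  also have "\<dots> = (mat_adjoint Y * mat_adjoint X) $$ (i,j)"
    using mat_mult_index[OF adj_carrier[OF Y] adj_carrier[OF X] i j] by simp
  finally show "mat_adjoint (X * Y) $$ (i,j) = (mat_adjoint Y * mat_adjoint X) $$ (i,j)" .
qed (use X Y in auto)

lemma self_adjoint_common_left_factor:
  assumes A: "(A :: complex mat) \<in> carrier_mat n n" and B: "B \<in> carrier_mat n n"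
    and C: "C \<in> carrier_mat n n" and sa: "mat_adjoint (A * mat_adjoint B) = A * mat_adjoint B"
  shows "mat_adjoint ((C * A) * mat_adjoint (C * B)) = (C * A) * mat_adjoint (C * B)"
proof -
  have aB: "mat_adjoint B \<in> carrier_mat n n" and aC: "mat_adjoint C \<in> carrier_mat n n" using B C by auto
  define K where "K = A * mat_adjoint B"
  have K: "K \<in> carrier_mat n n" using A aB unfolding K_def by auto
  have e: "(C * A) * mat_adjoint (C * B) = C * (K * mat_adjoint C)"
    unfolding adj_mult[OF C B] K_def
    using A aB aC C by (simp add: assoc_mult_mat[of _ n n _ n _ n])
  have "mat_adjoint (C * (K * mat_adjoint C)) = C * (mat_adjoint K * mat_adjoint C)"
    using C K aC adj_carrier[OF K] by (simp add: adj_mult[of _ n n _ n] adj_adj assoc_mult_mat[of _ n n _ n _ n])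
  thus ?thesis unfolding e using sa K_def by simp
qed

lemma det_nonzero_if_trivial_kernel:
  "(N :: 'a :: field mat) \<in> carrier_mat n n \<Longrightarrow> (\<And>v. v \<in> carrier_vec n \<Longrightarrow> N *\<^sub>v v = 0\<^sub>v n \<Longrightarrow> v = 0\<^sub>v n)
   \<Longrightarrow> det N \<noteq> 0"
  using det_0_iff_vec_prod_zero_field by blast

lemma trivial_kernel_if_det_nonzero:
  "(N :: 'a :: field mat) \<in> carrier_mat n n \<Longrightarrow> det N \<noteq> 0 \<Longrightarrow> v \<in> carrier_vec n \<Longrightarrow> N *\<^sub>v v = 0\<^sub>v n
   \<Longrightarrow> v = 0\<^sub>v n"
  using det_0_iff_vec_prod_zero_field by blast

lemma inverse_if_det_nonzero:
  assumes N: "(N :: 'a :: field mat) \<in> carrier_mat n n" and d: "det N \<noteq> 0"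
  obtains C where "C \<in> carrier_mat n n" "C * N = 1\<^sub>m n" "N * C = 1\<^sub>m n"
  using det_non_zero_imp_unit[OF N d, of "()"] unfolding Units_def ring_mat_def by auto

section \<open>Index sets of linearly independent and spanning columns\<close>

text \<open>The columns of M with indices in J are linearly independent, resp. span all
  columns of M; both notions refer to indices, so repeated columns are handled
  correctly.\<close>

definition indep_cols :: "'a::field mat \<Rightarrow> nat set \<Rightarrow> bool" where
 "indep_cols M J \<longleftrightarrow> (\<forall>c. (\<forall>i<dim_row M. (\<Sum>j\<in>J. c j * M $$ (i,j)) = 0) \<longrightarrow> (\<forall>j\<in>J. c j = 0))"

definition spans_cols :: "'a::field mat \<Rightarrow> nat set \<Rightarrow> bool" where
 "spans_cols M J \<longleftrightarrow> (\<forall>k<dim_col M. \<exists>c. \<forall>i<dim_row M. M $$ (i,k) = (\<Sum>j\<in>J. c j * M $$ (i,j)))"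

lemma indep_cols_empty: "indep_cols M {}"
  unfolding indep_cols_def by simp

lemma mult_column_combination:
  fixes C M :: "'a::comm_ring_1 mat"
  assumes C: "C \<in> carrier_mat nr n" and M: "M \<in> carrier_mat n nc" and J: "J \<subseteq> {..<nc}"
    and x: "x < nr" and c: "\<forall>l<n. M $$ (l,k) = (\<Sum>j\<in>J. c j * M $$ (l,j))" and k: "k < nc"
  shows "(C * M) $$ (x,k) = (\<Sum>j\<in>J. c j * (C * M) $$ (x,j))"
proof -
  have "(C * M) $$ (x,k) = (\<Sum>l<n. \<Sum>j\<in>J. C $$ (x,l) * (c j * M $$ (l,j)))"
    unfolding mat_mult_index[OF C M x k] using c by (simp add: sum_distrib_left)
  also have "\<dots> = (\<Sum>l<n. \<Sum>j\<in>J. c j * (C $$ (x,l) * M $$ (l,j)))"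
    by (intro sum.cong refl) (rule mult.left_commute)
  also have "\<dots> = (\<Sum>j\<in>J. \<Sum>l<n. c j * (C $$ (x,l) * M $$ (l,j)))" by (rule sum.swap)
  also have "\<dots> = (\<Sum>j\<in>J. c j * (C * M) $$ (x,j))"
    using J by (intro sum.cong refl) (auto simp: mat_mult_index[OF C M x] sum_distrib_left)
  finally show ?thesis .
qed

lemma extend_index_set:
  assumes inj: "inj_on f J0" and J0: "J0 \<subseteq> K" and S0: "f ` J0 \<subseteq> S" and SK: "S \<subseteq> f ` K"
  obtains J where "J0 \<subseteq> J" "J \<subseteq> K" "inj_on f J" "f ` J = S"
proof
  let ?g = "inv_into K f" and ?T = "S - f ` J0"
  have fg: "f (?g v) = v" if "v \<in> S" for v using SK that by (auto intro: f_inv_into_f)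
  have gK: "?g ` ?T \<subseteq> K" using SK by (auto intro: inv_into_into)
  show "J0 \<subseteq> J0 \<union> ?g ` ?T" "J0 \<union> ?g ` ?T \<subseteq> K" using J0 gK by auto
  have img: "f ` ?g ` ?T = ?T" using fg by (force simp: image_iff)
  show "f ` (J0 \<union> ?g ` ?T) = S" unfolding image_Un img using S0 by blast
  have "inj_on f (?g ` ?T)" using fg by (intro inj_onI) auto
  thus "inj_on f (J0 \<union> ?g ` ?T)" using inj img by (auto simp: inj_on_Un)
qed

context vec_space begin

lemma indep_cols_inj:
  fixes M :: "'a mat"
  assumes M: "M \<in> carrier_mat n nc" and J: "J \<subseteq> {..<nc}" and ind: "indep_cols M J"
  shows "inj_on (col M) J"
proof (rule inj_onI, rule ccontr)
  fix j1 j2 assume j: "j1 \<in> J" "j2 \<in> J" "col M j1 = col M j2" "j1 \<noteq> j2"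
  define c where "c = (\<lambda>j. if j = j1 then 1 else if j = j2 then - (1::'a) else 0)"
  have fin: "finite J" using J finite_subset by blast
  have "(\<Sum>j\<in>J. c j * M $$ (i,j)) = 0" if i: "i < dim_row M" for i
  proof -
    have "(\<Sum>j\<in>J. c j * M $$ (i,j)) = (\<Sum>j\<in>{j1,j2}. c j * M $$ (i,j))"
      by (rule sum.mono_neutral_right) (use fin j in \<open>auto simp: c_def\<close>)
    also have "\<dots> = M $$ (i,j1) - M $$ (i,j2)" using j by (simp add: c_def)
    also have "M $$ (i,j1) = col M j1 $ i" using i j(1) J M by auto
    also have "M $$ (i,j2) = col M j2 $ i" using i j(2) J M by auto
    finally show ?thesis using j(3) by simp
  qed
  with ind have "c j1 = 0" unfolding indep_cols_def using j by blast
  thus False unfolding c_def by simp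
qed

lemma indep_cols_iff_lin_indpt:
  fixes M :: "'a mat"
  assumes M: "M \<in> carrier_mat n nc" and J: "J \<subseteq> {..<nc}" and inj: "inj_on (col M) J"
  shows "indep_cols M J \<longleftrightarrow> lin_indpt (col M ` J)"
proof -
  have fin: "finite J" using J finite_subset by blast
  have sub: "col M ` J \<subseteq> carrier_vec n" using M J by auto
  have comb: "lincomb a (col M ` J) $ i = (\<Sum>j\<in>J. a (col M j) * M $$ (i,j))" if i: "i < n" for a i
  proof -
    have "lincomb a (col M ` J) $ i = (\<Sum>j\<in>J. a (col M j) * col M j $ i)"
      using lincomb_index[OF i sub] sum.reindex[OF inj, of "\<lambda>x. a x * x $ i"] by simp
    also have "\<dots> = (\<Sum>j\<in>J. a (col M j) * M $$ (i,j))" using J M i by (intro sum.cong) auto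
    finally show ?thesis .
  qed
  have lincomb0: "lincomb a (col M ` J) = 0\<^sub>v n \<longleftrightarrow>
      (\<forall>i<dim_row M. (\<Sum>j\<in>J. a (col M j) * M $$ (i,j)) = 0)" for a
  proof -
    have "dim_vec (lincomb a (col M ` J)) = n" by (rule lincomb_dim[OF finite_imageI[OF fin] sub])
    thus ?thesis using comb M unfolding vec_eq_iff by auto
  qed
  show ?thesis
  proof
    assume ind: "indep_cols M J"
    show "lin_indpt (col M ` J)"
    proof
      assume "lin_dep (col M ` J)"
      from finite_lin_dep[OF finite_imageI[OF fin] this sub] obtain a v where
        a: "lincomb a (col M ` J) = 0\<^sub>v n" "v \<in> col M ` J" "a v \<noteq> 0" by auto
      from ind have "(\<forall>i<dim_row M. (\<Sum>j\<in>J. a (col M j) * M $$ (i,j)) = 0) \<longrightarrow>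
          (\<forall>j\<in>J. a (col M j) = 0)" unfolding indep_cols_def by (rule spec)
      moreover have "\<forall>i<dim_row M. (\<Sum>j\<in>J. a (col M j) * M $$ (i,j)) = 0"
        using a(1) lincomb0[of a] by blast
      ultimately have "\<forall>j\<in>J. a (col M j) = 0" by blast
      thus False using a(2,3) by blast
    qed
  next
    assume li: "lin_indpt (col M ` J)"
    show "indep_cols M J" unfolding indep_cols_def
    proof (intro allI impI ballI, rule ccontr)
      fix c j0 assume eq: "\<forall>i<dim_row M. (\<Sum>j\<in>J. c j * M $$ (i,j)) = 0" and j0: "j0 \<in> J" "c j0 \<noteq> 0"
      define a where "a = (\<lambda>x. c (inv_into J (col M) x))"
      have ac: "a (col M j) = c j" if "j \<in> J" for j unfolding a_def using inj that by simp
      have "lincomb a (col M ` J) = 0\<^sub>v n" unfolding lincomb0 using eq ac by simp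
      moreover have "col M j0 \<in> col M ` J" "a (col M j0) \<noteq> 0" using ac j0 by auto
      ultimately have "lin_dep (col M ` J)"
        by (intro lin_dep_crit[OF finite_imageI[OF fin] subset_refl]) auto
      with li show False by simp
    qed
  qed
qed

lemma column_in_span_maximal:
  assumes M: "M \<in> carrier_mat n nc" and k: "k < nc"
    and S: "maximal S (\<lambda>T. T \<subseteq> set (cols M) \<and> lin_indpt T)"
  shows "col M k \<in> span S"
proof -
  have Ssub: "S \<subseteq> set (cols M)" and liS: "lin_indpt S" using S unfolding maximal_def by auto
  have Scar: "S \<subseteq> carrier_vec n" using Ssub M by (auto simp: cols_def)
  have ck: "col M k \<in> set (cols M)" using M k by (auto simp: cols_def)
  show ?thesis
  proof (cases "col M k \<in> S")
    case True
    thus ?thesis using in_own_span[OF Scar] by auto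
  next
    case False
    have "S \<union> {col M k} \<noteq> S" using False by blast
    hence "\<not> lin_indpt (S \<union> {col M k})"
      using S ck Ssub unfolding maximal_def by blast
    thus ?thesis using lin_dep_iff_in_span[OF Scar liS _ False] M k by auto
  qed
qed

lemma cols_basis:
  fixes M :: "'a mat"
  assumes M: "M \<in> carrier_mat n nc" and J0: "J0 \<subseteq> {..<nc}" and ind0: "indep_cols M J0"
  obtains J where "J0 \<subseteq> J" "J \<subseteq> {..<nc}" "card J = rank M" "indep_cols M J" "spans_cols M J"
proof -
  have inj0: "inj_on (col M) J0" by (rule indep_cols_inj[OF M J0 ind0])
  have colsM: "set (cols M) = col M ` {..<nc}" using M by (auto simp: cols_def)
  have li0: "lin_indpt (col M ` J0)" using indep_cols_iff_lin_indpt[OF M J0 inj0] ind0 by simp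
  obtain S where S: "maximal S (\<lambda>T. T \<subseteq> set (cols M) \<and> lin_indpt T)" "col M ` J0 \<subseteq> S"
    using maximal_exists_superset[of "set (cols M)" "\<lambda>T. T \<subseteq> set (cols M) \<and> lin_indpt T" "col M ` J0"]
      li0 J0 colsM by auto
  have Ssub: "S \<subseteq> col M ` {..<nc}" and liS: "lin_indpt S" using S(1) colsM unfolding maximal_def by auto
  obtain J where J: "J0 \<subseteq> J" "J \<subseteq> {..<nc}" "inj_on (col M) J" "col M ` J = S"
    using extend_index_set[OF inj0 J0 S(2) Ssub] by blast
  have fin: "finite J" using J(2) finite_subset by blast
  have "spans_cols M J" unfolding spans_cols_def
  proof (intro allI impI)
    fix k assume "k < dim_col M"
    hence k: "k < nc" using M by simp
    have Scar: "col M ` J \<subseteq> carrier_vec n" using J(2) M by auto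
    from column_in_span_maximal[OF M k S(1)] J(4) obtain a where a: "col M k = lincomb a (col M ` J)"
      using finite_span[OF finite_imageI[OF fin] Scar] by auto
    have "M $$ (i,k) = (\<Sum>j\<in>J. a (col M j) * M $$ (i,j))" if i: "i < n" for i
    proof -
      have "M $$ (i,k) = col M k $ i" using i k M by simp
      also have "\<dots> = lincomb a (col M ` J) $ i" by (simp only: a)
      also have "\<dots> = (\<Sum>j\<in>J. a (col M j) * col M j $ i)"
        using lincomb_index[OF i Scar] sum.reindex[OF J(3), of "\<lambda>x. a x * x $ i"] by simp
      also have "\<dots> = (\<Sum>j\<in>J. a (col M j) * M $$ (i,j))" using i M J(2) by (intro sum.cong) auto
      finally show ?thesis .
    qed
    thus "\<exists>c. \<forall>i<dim_row M. M $$ (i,k) = (\<Sum>j\<in>J. c j * M $$ (i,j))" using M by auto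
  qed
  moreover have "card J = rank M"
    using rank_card_indpt[OF M S(1)] card_image[OF J(3)] J(4) by simp
  moreover have "indep_cols M J" using indep_cols_iff_lin_indpt[OF M J(2,3)] J(4) liS by simp
  ultimately show ?thesis using that J(1,2) by blast
qed

end

section \<open>Consequences of admissibility\<close>

lemma full_rank_trivial_left_kernel:
  fixes H :: "'a::field mat"
  assumes H: "H \<in> carrier_mat n nc" and rk: "vec_space.rank n H = n" and z: "z \<in> carrier_vec n"
    and zH: "\<forall>k<nc. (\<Sum>i<n. z $ i * H $$ (i,k)) = 0"
  shows "z = 0\<^sub>v n"
proof -
  obtain J where J: "J \<subseteq> {..<nc}" "card J = n" "indep_cols H J"
    using vec_space.cols_basis[OF H _ indep_cols_empty] rk by (metis empty_subsetI)
  obtain h where h: "bij_betw h {..<n} J"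
    using ex_bij_betw_nat_finite[OF finite_subset[OF J(1)]] J(2) by (auto simp: atLeast0LessThan)
  have hJ: "h j \<in> J" if "j < n" for j using h that unfolding bij_betw_def by auto
  define N where "N = mat n n (\<lambda>(i,j). H $$ (i, h j))"
  have N: "N \<in> carrier_mat n n" and NT: "transpose_mat N \<in> carrier_mat n n" unfolding N_def by auto
  have "det N \<noteq> 0"
  proof (rule det_nonzero_if_trivial_kernel[OF N])
    fix v :: "'a vec" assume v: "v \<in> carrier_vec n" and Nv: "N *\<^sub>v v = 0\<^sub>v n"
    define c where "c = (\<lambda>k. v $ (inv_into {..<n} h k))"
    have ch: "c (h j) = v $ j" if "j < n" for j
      unfolding c_def using h that by (auto simp: bij_betw_def inv_into_f_f)
    have "(\<Sum>k\<in>J. c k * H $$ (i,k)) = 0" if i: "i < n" for i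
    proof -
      have "(\<Sum>k\<in>J. c k * H $$ (i,k)) = (\<Sum>j<n. c (h j) * H $$ (i, h j))"
        using sum.reindex_bij_betw[OF h, of "\<lambda>k. c k * H $$ (i,k)"] by simp
      also have "\<dots> = (N *\<^sub>v v) $ i"
        unfolding mat_vec_index[OF N v i] unfolding N_def using i ch by (intro sum.cong) auto
      finally show ?thesis using Nv i by simp
    qed
    with J(3) H have "\<forall>k\<in>J. c k = 0" unfolding indep_cols_def by auto
    thus "v = 0\<^sub>v n" using ch hJ v by (intro eq_vecI) auto
  qed
  moreover have "transpose_mat N *\<^sub>v z = 0\<^sub>v n"
  proof (rule eq_vecI)
    fix j assume "j < dim_vec (0\<^sub>v n)"
    hence j: "j < n" by simp
    have "(transpose_mat N *\<^sub>v z) $ j = (\<Sum>i<n. z $ i * H $$ (i, h j))"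
      unfolding mat_vec_index[OF NT z j] unfolding N_def using j by (intro sum.cong) auto
    thus "(transpose_mat N *\<^sub>v z) $ j = 0\<^sub>v n $ j" using zH hJ[OF j] J(1) j by auto
  qed (use NT in simp)
  ultimately show ?thesis using trivial_kernel_if_det_nonzero[OF NT _ z] det_transpose[OF N] by simp
qed

lemma adm_left_kernel:
  assumes adm: "admissible n A B" and z: "z \<in> carrier_vec n"
    and zA: "\<forall>j<n. (\<Sum>i<n. z $ i * A $$ (i,j)) = 0" and zB: "\<forall>j<n. (\<Sum>i<n. z $ i * B $$ (i,j)) = 0"
  shows "z = 0\<^sub>v n"
proof (rule full_rank_trivial_left_kernel[OF _ _ z])
  have A: "A \<in> carrier_mat n n" and B: "B \<in> carrier_mat n n" using adm unfolding admissible_def by auto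
  show "hcat A B \<in> carrier_mat n (n+n)" using A B unfolding hcat_def by auto
  show "vec_space.rank n (hcat A B) = n" using adm unfolding admissible_def by auto
  show "\<forall>k<n+n. (\<Sum>i<n. z $ i * hcat A B $$ (i,k)) = 0"
  proof (intro allI impI)
    fix k assume k: "k < n+n"
    show "(\<Sum>i<n. z $ i * hcat A B $$ (i,k)) = 0"
    proof (cases "k < n")
      case True
      thus ?thesis using zA A by (simp add: hcat_def)
    next
      case False
      thus ?thesis using zB[rule_format, of "k-n"] k A B by (simp add: hcat_def)
    qed
  qed
qed

lemma adm_sym:
  assumes adm: "admissible n A B" and i: "i < n" and j: "j < n"
  shows "(\<Sum>l<n. A $$ (i,l) * cnj (B $$ (j,l))) = (\<Sum>l<n. B $$ (i,l) * cnj (A $$ (j,l)))"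
proof -
  have A: "A \<in> carrier_mat n n" and B: "B \<in> carrier_mat n n"
    and sa: "mat_adjoint (A * mat_adjoint B) = A * mat_adjoint B"
    using adm unfolding admissible_def by auto
  have e: "(A * mat_adjoint B) $$ (x,y) = (\<Sum>l<n. A $$ (x,l) * cnj (B $$ (y,l)))" if "x < n" "y < n" for x y
    using mat_mult_index[OF A adj_carrier[OF B] that] that B by simp
  have "(\<Sum>l<n. A $$ (i,l) * cnj (B $$ (j,l))) = mat_adjoint (A * mat_adjoint B) $$ (i,j)"
    using e[OF i j] sa by simp
  also have "\<dots> = cnj ((A * mat_adjoint B) $$ (j,i))" using A B i j by simp
  also have "\<dots> = (\<Sum>l<n. B $$ (i,l) * cnj (A $$ (j,l)))" using e[OF j i] by (simp add: mult.commute)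
  finally show ?thesis .
qed

lemma left_null_spanning_cols:
  fixes M :: "'a::field mat"
  assumes M: "M \<in> carrier_mat n nc" and sp: "spans_cols M J" and k: "k < nc"
    and zJ: "\<And>j. j \<in> J \<Longrightarrow> (\<Sum>i<n. z $ i * M $$ (i,j)) = 0"
  shows "(\<Sum>i<n. z $ i * M $$ (i,k)) = 0"
proof -
  from sp[unfolded spans_cols_def] k M obtain c where c: "\<forall>i<n. M $$ (i,k) = (\<Sum>j\<in>J. c j * M $$ (i,j))"
    by auto
  have "(\<Sum>i<n. z $ i * M $$ (i,k)) = (\<Sum>i<n. \<Sum>j\<in>J. c j * (z $ i * M $$ (i,j)))"
    using c by (simp add: sum_distrib_left mult.left_commute)
  also have "\<dots> = (\<Sum>j\<in>J. c j * (\<Sum>i<n. z $ i * M $$ (i,j)))"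
    by (simp add: sum.swap[of _ "{..<n}" J] sum_distrib_left)
  also have "\<dots> = 0" using zJ by simp
  finally show ?thesis .
qed

text \<open>If z B = 0 then (z A) B^* = z (A B^*) = z (B A^*) = 0.\<close>

lemma adm_left_null_transfer:
  assumes adm: "admissible n A B" and zB: "\<forall>k<n. (\<Sum>i<n. z $ i * B $$ (i,k)) = 0" and j: "j < n"
  shows "(\<Sum>l<n. (\<Sum>i<n. z $ i * A $$ (i,l)) * cnj (B $$ (j,l))) = 0"
proof -
  have "(\<Sum>l<n. (\<Sum>i<n. z $ i * A $$ (i,l)) * cnj (B $$ (j,l)))
      = (\<Sum>l<n. \<Sum>i<n. z $ i * (A $$ (i,l) * cnj (B $$ (j,l))))"
    by (simp add: sum_distrib_right mult.assoc)
  also have "\<dots> = (\<Sum>i<n. z $ i * (\<Sum>l<n. A $$ (i,l) * cnj (B $$ (j,l))))"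
    by (subst sum.swap) (simp add: sum_distrib_left)
  also have "\<dots> = (\<Sum>i<n. z $ i * (\<Sum>l<n. B $$ (i,l) * cnj (A $$ (j,l))))"
    using adm_sym[OF adm _ j] by simp
  also have "\<dots> = (\<Sum>i<n. \<Sum>l<n. cnj (A $$ (j,l)) * (z $ i * B $$ (i,l)))"
    by (simp add: sum_distrib_left mult.assoc mult.left_commute mult.commute)
  also have "\<dots> = (\<Sum>l<n. cnj (A $$ (j,l)) * (\<Sum>i<n. z $ i * B $$ (i,l)))"
    by (subst sum.swap) (simp add: sum_distrib_left)
  also have "\<dots> = 0" using zB by simp
  finally show ?thesis .
qed

definition mixed_cols :: "nat set \<Rightarrow> 'a mat \<Rightarrow> 'a mat \<Rightarrow> 'a mat" where
  "mixed_cols J M1 M2 = mat (dim_row M1) (dim_col M1) (\<lambda>(i,j). if j \<in> J then M1 $$ (i,j) else M2 $$ (i,j))"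

text \<open>A left null vector z annihilates
  the columns of B on J, hence all of B; then z A vanishes off J and, by the transfer
  lemma, is orthogonal to the rows of B, so it vanishes on J by independence; the rank
  condition then gives z = 0.\<close>

lemma mixed_cols_left_kernel:
  assumes adm: "admissible n A B" and J: "J \<subseteq> {..<n}" and ind: "indep_cols B J" and sp: "spans_cols B J"
    and z: "z \<in> carrier_vec n"
    and zN: "\<And>j. j < n \<Longrightarrow> (\<Sum>i<n. z $ i * (if j \<in> J then B $$ (i,j) else A $$ (i,j))) = 0"
  shows "z = 0\<^sub>v n"
proof -
  have B: "B \<in> carrier_mat n n" using adm unfolding admissible_def by auto
  have zJ: "(\<Sum>i<n. z $ i * B $$ (i,j)) = 0" if "j \<in> J" for j
    using zN[of j] that J by auto
  have zB: "\<forall>k<n. (\<Sum>i<n. z $ i * B $$ (i,k)) = 0"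
    using left_null_spanning_cols[OF B sp _ zJ] by blast
  define u where "u = (\<lambda>l. \<Sum>i<n. z $ i * A $$ (i,l))"
  have u_off: "u l = 0" if "l < n" "l \<notin> J" for l using zN[of l] that unfolding u_def by simp
  have orth: "\<forall>j<dim_row B. (\<Sum>l\<in>J. cnj (u l) * B $$ (j,l)) = 0"
  proof (intro allI impI)
    fix j assume "j < dim_row B"
    hence j: "j < n" using B by simp
    have "(\<Sum>l\<in>J. cnj (u l) * B $$ (j,l)) = (\<Sum>l<n. cnj (u l) * B $$ (j,l))"
      by (rule sum.mono_neutral_left) (use J u_off in auto)
    also have "\<dots> = cnj (\<Sum>l<n. u l * cnj (B $$ (j,l)))" by simp
    also have "\<dots> = 0" using adm_left_null_transfer[OF adm zB j] unfolding u_def by simp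
    finally show "(\<Sum>l\<in>J. cnj (u l) * B $$ (j,l)) = 0" .
  qed
  from ind have "(\<forall>j<dim_row B. (\<Sum>l\<in>J. cnj (u l) * B $$ (j,l)) = 0) \<longrightarrow> (\<forall>l\<in>J. cnj (u l) = 0)"
    unfolding indep_cols_def by (rule spec)
  with orth have "\<forall>l\<in>J. cnj (u l) = 0" by blast
  hence u_on: "u l = 0" if "l \<in> J" for l using that by simp
  have "\<forall>l<n. (\<Sum>i<n. z $ i * A $$ (i,l)) = 0"
  proof (intro allI impI)
    fix l assume "l < n"
    thus "(\<Sum>i<n. z $ i * A $$ (i,l)) = 0" using u_on u_off unfolding u_def by (cases "l \<in> J") auto
  qed
  thus ?thesis by (rule adm_left_kernel[OF adm z _ zB])
qed

lemma mixed_cols_invertible: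
  assumes adm: "admissible n A B" and J: "J \<subseteq> {..<n}" "indep_cols B J" "spans_cols B J"
  shows "det (mixed_cols J B A) \<noteq> 0"
proof -
  have B: "B \<in> carrier_mat n n" using adm unfolding admissible_def by auto
  define N where "N = mixed_cols J B A"
  have N: "N \<in> carrier_mat n n" and NT: "transpose_mat N \<in> carrier_mat n n"
    unfolding N_def mixed_cols_def using B by auto
  have "det (transpose_mat N) \<noteq> 0"
  proof (rule det_nonzero_if_trivial_kernel[OF NT])
    fix z :: "complex vec" assume z: "z \<in> carrier_vec n" and Nz: "transpose_mat N *\<^sub>v z = 0\<^sub>v n"
    show "z = 0\<^sub>v n"
    proof (rule mixed_cols_left_kernel[OF adm J z])
      fix j assume j: "j < n"
      have "(\<Sum>i<n. z $ i * (if j \<in> J then B $$ (i,j) else A $$ (i,j))) = (transpose_mat N *\<^sub>v z) $ j"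
        unfolding mat_vec_index[OF NT z j] unfolding N_def mixed_cols_def using j B
        by (intro sum.cong) auto
      thus "(\<Sum>i<n. z $ i * (if j \<in> J then B $$ (i,j) else A $$ (i,j))) = 0" using Nz j by simp
    qed
  qed
  thus ?thesis using det_transpose[OF N] unfolding N_def by simp
qed

lemma inverse_mult_shared_column:
  fixes C N M :: "'a::comm_ring_1 mat"
  assumes C: "C \<in> carrier_mat n n" and N: "N \<in> carrier_mat n n" and M: "M \<in> carrier_mat n n"
    and CN: "C * N = 1\<^sub>m n" and x: "x < n" and k: "k < n" and col: "\<forall>l<n. M $$ (l,k) = N $$ (l,k)"
  shows "(C * M) $$ (x,k) = (if x = k then 1 else 0)"
proof -
  have "(C * M) $$ (x,k) = (C * N) $$ (x,k)"
    unfolding mat_mult_index[OF C M x k] mat_mult_index[OF C N x k] using col by (intro sum.cong) auto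
  thus ?thesis using CN x k by simp
qed

lemma indep_cols_shared_with_invertible:
  fixes N M :: "'a::field mat"
  assumes N: "N \<in> carrier_mat n n" and d: "det N \<noteq> 0" and M: "M \<in> carrier_mat n n"
    and J: "J \<subseteq> {..<n}" and col: "\<forall>l<n. \<forall>j\<in>J. M $$ (l,j) = N $$ (l,j)"
  shows "indep_cols M J"
  unfolding indep_cols_def
proof (intro allI impI ballI)
  fix c j assume eq: "\<forall>i<dim_row M. (\<Sum>j\<in>J. c j * M $$ (i,j)) = 0" and j: "j \<in> J"
  define v where "v = vec n (\<lambda>j. if j \<in> J then c j else 0)"
  have v: "v \<in> carrier_vec n" unfolding v_def by simp
  have "N *\<^sub>v v = 0\<^sub>v n"
  proof (rule eq_vecI)
    fix i assume "i < dim_vec (0\<^sub>v n)"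
    hence i: "i < n" by simp
    have "(N *\<^sub>v v) $ i = (\<Sum>l<n. if l \<in> J then c l * M $$ (i,l) else 0)"
      unfolding mat_vec_index[OF N v i] unfolding v_def using i col by (intro sum.cong) auto
    also have "\<dots> = (\<Sum>l\<in>{l\<in>{..<n}. l \<in> J}. c l * M $$ (i,l))"
      by (rule sum.inter_filter[symmetric]) simp
    also have "{l\<in>{..<n}. l \<in> J} = J" using J by blast
    finally show "(N *\<^sub>v v) $ i = 0\<^sub>v n $ i" using eq i M by simp
  qed (use N in simp)
  hence "v = 0\<^sub>v n" by (rule trivial_kernel_if_det_nonzero[OF N d v])
  moreover have "j < n" using j J by auto
  moreover have "v $ j = c j" unfolding v_def using j \<open>j < n\<close> by simp
  ultimately show "c j = 0" by simp
qed

lemma indep_cols_mult_injective: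
  fixes C M :: "'a::field mat"
  assumes C: "C \<in> carrier_mat n n" and C_inj: "\<And>v. v \<in> carrier_vec n \<Longrightarrow> C *\<^sub>v v = 0\<^sub>v n \<Longrightarrow> v = 0\<^sub>v n"
    and M: "M \<in> carrier_mat n nc" and J: "J \<subseteq> {..<nc}" and ind: "indep_cols M J"
  shows "indep_cols (C * M) J"
  unfolding indep_cols_def
proof (intro allI impI)
  fix c assume eq: "\<forall>y<dim_row (C * M). (\<Sum>x\<in>J. c x * (C * M) $$ (y,x)) = 0"
  define w where "w = vec n (\<lambda>l. \<Sum>x\<in>J. c x * M $$ (l,x))"
  have w: "w \<in> carrier_vec n" unfolding w_def by simp
  have "C *\<^sub>v w = 0\<^sub>v n"
  proof (rule eq_vecI)
    fix y assume "y < dim_vec (0\<^sub>v n)"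
    hence y: "y < n" by simp
    have "(C *\<^sub>v w) $ y = (\<Sum>l<n. \<Sum>x\<in>J. c x * (C $$ (y,l) * M $$ (l,x)))"
      unfolding mat_vec_index[OF C w y] unfolding w_def
      by (intro sum.cong refl) (simp add: sum_distrib_left mult.left_commute)
    also have "\<dots> = (\<Sum>x\<in>J. c x * (C * M) $$ (y,x))"
      using J by (subst sum.swap) (auto simp: mat_mult_index[OF C M y] sum_distrib_left intro!: sum.cong)
    finally show "(C *\<^sub>v w) $ y = 0\<^sub>v n $ y" using eq y C by simp
  qed (use C in simp)
  hence "w = 0\<^sub>v n" using C_inj w by blast
  hence "\<forall>l<dim_row M. (\<Sum>x\<in>J. c x * M $$ (l,x)) = 0" using M unfolding w_def by (auto simp: vec_eq_iff)
  with ind show "\<forall>x\<in>J. c x = 0" unfolding indep_cols_def by blast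
qed

lemma mixed_cols_inverse:
  assumes adm: "admissible n A B" and J: "J \<subseteq> {..<n}" "indep_cols B J" "spans_cols B J"
  obtains C where "C \<in> carrier_mat n n" "\<And>v. v \<in> carrier_vec n \<Longrightarrow> C *\<^sub>v v = 0\<^sub>v n \<Longrightarrow> v = 0\<^sub>v n"
    "\<forall>x<n. \<forall>k\<in>J. (C * B) $$ (x,k) = (if x = k then 1 else 0)"
    "\<forall>x<n. \<forall>k\<in>{..<n} - J. (C * A) $$ (x,k) = (if x = k then 1 else 0)"
    "indep_cols A ({..<n} - J)"
proof -
  have A: "A \<in> carrier_mat n n" and B: "B \<in> carrier_mat n n" using adm unfolding admissible_def by auto
  define N where "N = mixed_cols J B A"
  have N: "N \<in> carrier_mat n n" unfolding N_def mixed_cols_def using B by auto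
  have dN: "det N \<noteq> 0" unfolding N_def by (rule mixed_cols_invertible[OF adm J])
  obtain C where C: "C \<in> carrier_mat n n" "C * N = 1\<^sub>m n" "N * C = 1\<^sub>m n"
    using inverse_if_det_nonzero[OF N dN] by blast
  have Cinj: "v = 0\<^sub>v n" if v: "v \<in> carrier_vec n" and Cv: "C *\<^sub>v v = 0\<^sub>v n" for v
  proof -
    have "v = N *\<^sub>v (C *\<^sub>v v)" using C(3) assoc_mult_mat_vec[OF N C(1) v] v by simp
    thus ?thesis unfolding Cv using N by auto
  qed
  have NB: "\<forall>l<n. B $$ (l,k) = N $$ (l,k)" if "k \<in> J" for k
    using that J(1) B unfolding N_def mixed_cols_def by auto
  have NA: "\<forall>l<n. A $$ (l,k) = N $$ (l,k)" if "k \<in> {..<n} - J" for k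
    using that B unfolding N_def mixed_cols_def by auto
  show ?thesis
  proof (rule that[OF C(1) Cinj])
    show "\<forall>x<n. \<forall>k\<in>J. (C * B) $$ (x,k) = (if x = k then 1 else 0)"
      using inverse_mult_shared_column[OF C(1) N B C(2)] NB J(1) by blast
    show "\<forall>x<n. \<forall>k\<in>{..<n} - J. (C * A) $$ (x,k) = (if x = k then 1 else 0)"
      using inverse_mult_shared_column[OF C(1) N A C(2)] NA by blast
    show "indep_cols A ({..<n} - J)"
      using NA by (intro indep_cols_shared_with_invertible[OF N dN A]) auto
  qed
qed

text \<open>Choose a column basis J1 \<union> J2 of B, let J3 be the
  remaining indices and extend J3 to a column basis J1 \<union> J3 of A.  With C the inverse
  of the mixed matrix, C B has unit columns on J1 \<union> J2 and C A has unit columns on J3.\<close>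

lemma normalizing_transformation:
  assumes adm: "admissible n A B"
  defines "rA \<equiv> vec_space.rank n A" and "rB \<equiv> vec_space.rank n B"
  obtains J1 J2 J3 C where "rA + rB \<ge> n" "rA \<le> n" "rB \<le> n"
    "J1 \<union> J2 \<union> J3 = {..<n}" "J1 \<inter> J2 = {}" "J1 \<inter> J3 = {}" "J2 \<inter> J3 = {}"
    "card J1 = rA + rB - n" "card J2 = n - rA" "card J3 = n - rB"
    "C \<in> carrier_mat n n" "\<And>v. v \<in> carrier_vec n \<Longrightarrow> C *\<^sub>v v = 0\<^sub>v n \<Longrightarrow> v = 0\<^sub>v n"
    "\<forall>x<n. \<forall>k\<in>J1 \<union> J2. (C * B) $$ (x,k) = (if x = k then 1 else 0)"
    "\<forall>x<n. \<forall>k\<in>J3. (C * A) $$ (x,k) = (if x = k then 1 else 0)"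
    "spans_cols B (J1 \<union> J2)" "indep_cols A (J1 \<union> J3)" "spans_cols A (J1 \<union> J3)"
proof -
  have A: "A \<in> carrier_mat n n" and B: "B \<in> carrier_mat n n" using adm unfolding admissible_def by auto
  obtain J12 where J12: "J12 \<subseteq> {..<n}" "card J12 = rB" "indep_cols B J12" "spans_cols B J12"
    using vec_space.cols_basis[OF B _ indep_cols_empty] unfolding rB_def by (metis empty_subsetI)
  define J3 where "J3 = {..<n} - J12"
  obtain C where C: "C \<in> carrier_mat n n" "\<And>v. v \<in> carrier_vec n \<Longrightarrow> C *\<^sub>v v = 0\<^sub>v n \<Longrightarrow> v = 0\<^sub>v n"
    "\<forall>x<n. \<forall>k\<in>J12. (C * B) $$ (x,k) = (if x = k then 1 else 0)"
    "\<forall>x<n. \<forall>k\<in>J3. (C * A) $$ (x,k) = (if x = k then 1 else 0)" "indep_cols A J3"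
    using mixed_cols_inverse[OF adm J12(1,3,4)] unfolding J3_def by blast
  have J3: "J3 \<subseteq> {..<n}" "card J3 = n - rB"
    using J12 by (auto simp: J3_def card_Diff_subset finite_subset)
  obtain J' where J': "J3 \<subseteq> J'" "J' \<subseteq> {..<n}" "card J' = rA" "indep_cols A J'" "spans_cols A J'"
    using vec_space.cols_basis[OF A J3(1) C(5)] unfolding rA_def by blast
  define J1 where "J1 = J' - J3"
  define J2 where "J2 = J12 - J1"
  have fin: "finite J12" "finite J'" using J12(1) J'(2) finite_subset by auto
  have le: "rA \<le> n" "rB \<le> n" using card_mono[OF _ J'(2)] J'(3) card_mono[OF _ J12(1)] J12(2) by auto
  have ge: "rA + rB \<ge> n" using card_mono[OF fin(2) J'(1)] J'(3) J3(2) by simp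
  have J1J12: "J1 \<subseteq> J12" unfolding J1_def J3_def using J'(2) by auto
  have cJ1: "card J1 = rA + rB - n"
    unfolding J1_def using card_Diff_subset[OF finite_subset[OF J'(1) fin(2)] J'(1)] J'(3) J3(2) le ge
    by simp
  have cJ2: "card J2 = n - rA"
    unfolding J2_def using card_Diff_subset[OF finite_subset[OF J1J12 fin(1)] J1J12] cJ1 J12(2) le ge
    by simp
  have J12eq: "J1 \<union> J2 = J12" unfolding J2_def using J1J12 by auto
  have J'eq: "J1 \<union> J3 = J'" unfolding J1_def using J'(1) by auto
  show ?thesis
  proof (rule that[OF ge le _ _ _ _ cJ1 cJ2 J3(2) C(1,2) _ C(4)])
    show "J1 \<union> J2 \<union> J3 = {..<n}" "J1 \<inter> J2 = {}" "J1 \<inter> J3 = {}" "J2 \<inter> J3 = {}"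
      unfolding J1_def J2_def J3_def using J'(2) J12(1) by auto
    show "\<forall>x<n. \<forall>k\<in>J1 \<union> J2. (C * B) $$ (x,k) = (if x = k then 1 else 0)"
      unfolding J12eq by (rule C(3))
    show "spans_cols B (J1 \<union> J2)" "indep_cols A (J1 \<union> J3)" "spans_cols A (J1 \<union> J3)"
      unfolding J12eq J'eq using J12 J' by auto
  qed
qed

section \<open>Normalised systems and the PQRS form\<close>

lemma B_PQRS_index:
  assumes i: "i < m+a+b" and j: "j < m+a+b"
    and P: "P \<in> carrier_mat m b" and Q: "Q \<in> carrier_mat a b" and R: "R \<in> carrier_mat a m"
  shows "B_PQRS m a b P Q R $$ (i,j) =
   (if i < m then (if j < m then (if i = j then 1 else 0) else if j < m+a then 0 else P $$ (i, j-m-a))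
    else if i < m+a then (if j < m then R $$ (i-m, j) else if j < m+a then (if i = j then 1 else 0) else Q $$ (i-m, j-m-a))
    else 0)"
  using i j P Q R unfolding B_PQRS_def block3_def blk_idx_def by (auto simp: Let_def)

lemma A_PQRS_index:
  assumes i: "i < m+a+b" and j: "j < m+a+b"
    and P: "P \<in> carrier_mat m b" and Q: "Q \<in> carrier_mat a b" and R: "R \<in> carrier_mat a m"
    and S: "S \<in> carrier_mat m m"
  shows "A_PQRS m a b P Q R S $$ (i,j) =
   (if i < m then (if j < m then S $$ (i,j) else if j < m+a then - (\<Sum>l<m. S $$ (i,l) * cnj (R $$ (j-m,l))) else 0)
    else if i < m+a then 0
    else (if j < m then - cnj (P $$ (j, i-m-a))
          else if j < m+a then cnj ((\<Sum>l<m. R $$ (j-m,l) * P $$ (l,i-m-a)) - Q $$ (j-m, i-m-a))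
          else (if i = j then 1 else 0)))"
proof -
  have e1: "(S * mat_adjoint R) $$ (i',j') = (\<Sum>l<m. S $$ (i',l) * cnj (R $$ (j',l)))" if "i' < m" "j' < a" for i' j'
    using mat_mult_index[OF S adj_carrier[OF R] that] that R by simp
  have e0: "(- (S * mat_adjoint R)) $$ (i',j') = - (\<Sum>l<m. S $$ (i',l) * cnj (R $$ (j',l)))" if "i' < m" "j' < a" for i' j'
    using e1[OF that] that R S by simp
  have e2: "(R * P) $$ (i',j') = (\<Sum>l<m. R $$ (i',l) * P $$ (l,j'))" if "i' < a" "j' < b" for i' j'
    using mat_mult_index[OF R P that] .
  show ?thesis
    using i j P Q R S unfolding A_PQRS_def block3_def blk_idx_def
    by (auto simp: Let_def e0 e2 simp del: index_mult_mat)
qed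

text \<open>The
  locale describes a system f u + g u' = 0 (f, g the coefficient matrices as functions of
  row and column index) obtained from an admissible coupling by an invertible row
  transformation and a permutation of coordinates: g has unit columns in the first two
  blocks and vanishing last block row, f has unit columns in the last block, the upper
  left (m+a) square of f is Hermitian and coupled to g by the last block row (both are
  consequences of the self-adjointness of f g^*), the middle columns of f are
  combinations (coefficients X, Y) of the first and last ones, and the first and last
  columns of f are independent, as far as the first block of coefficients is concerned.\<close>

locale pqrs_normalised =
  fixes m a b :: nat and f g X Y :: "nat \<Rightarrow> nat \<Rightarrow> complex"
  assumes g_unit_cols: "\<And>i j. i < m+a+b \<Longrightarrow> j < m+a \<Longrightarrow> g i j = (if i = j then 1 else 0)"
    and g_zero_rows: "\<And>i j. m+a \<le> i \<Longrightarrow> i < m+a+b \<Longrightarrow> j < m+a+b \<Longrightarrow> g i j = 0"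
    and f_unit_cols: "\<And>i j. i < m+a+b \<Longrightarrow> m+a \<le> j \<Longrightarrow> j < m+a+b \<Longrightarrow> f i j = (if i = j then 1 else 0)"
    and f_hermitian: "\<And>i j. i < m+a \<Longrightarrow> j < m+a \<Longrightarrow> f i j = cnj (f j i)"
    and f_g_adjoint: "\<And>i j. m+a \<le> i \<Longrightarrow> i < m+a+b \<Longrightarrow> j < m+a \<Longrightarrow> f i j = - cnj (g j i)"
    and f_middle_cols: "\<And>i j. m \<le> j \<Longrightarrow> j < m+a \<Longrightarrow> i < m+a+b \<Longrightarrow>
        f i j = (\<Sum>l<m. X l j * f i l) + (\<Sum>l<b. Y l j * f i (m+a+l))"
    and f_indep: "\<And>V. (\<forall>i<m+a+b. (\<Sum>l<m. V l * f i l) + (\<Sum>l<b. V (m+a+l) * f i (m+a+l)) = 0)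
        \<Longrightarrow> \<forall>l<m. V l = 0"

definition S_of :: "nat \<Rightarrow> (nat \<Rightarrow> nat \<Rightarrow> complex) \<Rightarrow> complex mat" where
  "S_of m f = mat m m (\<lambda>(i,j). - f i j)"

definition R_of :: "nat \<Rightarrow> nat \<Rightarrow> (nat \<Rightarrow> nat \<Rightarrow> complex) \<Rightarrow> complex mat" where
  "R_of m a X = mat a m (\<lambda>(i,j). - cnj (X j (m+i)))"

definition P_of :: "nat \<Rightarrow> nat \<Rightarrow> nat \<Rightarrow> (nat \<Rightarrow> nat \<Rightarrow> complex) \<Rightarrow> complex mat" where
  "P_of m a b g = mat m b (\<lambda>(i,j). g i (m+a+j))"

definition Q_of :: "nat \<Rightarrow> nat \<Rightarrow> nat \<Rightarrow> (nat \<Rightarrow> nat \<Rightarrow> complex) \<Rightarrow> (nat \<Rightarrow> nat \<Rightarrow> complex) \<Rightarrow> complex mat"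
  where "Q_of m a b g X = mat a b (\<lambda>(i,j). g (m+i) (m+a+j) + (\<Sum>l<m. R_of m a X $$ (i,l) * g l (m+a+j)))"

definition row_elim :: "nat \<Rightarrow> nat \<Rightarrow> (nat \<Rightarrow> nat \<Rightarrow> complex) \<Rightarrow> (nat \<Rightarrow> nat \<Rightarrow> complex)
    \<Rightarrow> nat \<Rightarrow> nat \<Rightarrow> complex" where
  "row_elim m a X h i j = (if i < m then h i j
     else if i < m+a then h i j + (\<Sum>l<m. R_of m a X $$ (i-m,l) * h l j) else - h i j)"

lemma row_elim_zero_iff:
  "(\<forall>i<m+a+b. row_elim m a X (\<lambda>l _. w l) i 0 = 0) \<longleftrightarrow> (\<forall>i<m+a+b. w i = 0)"
proof
  assume L: "\<forall>i<m+a+b. row_elim m a X (\<lambda>l _. w l) i 0 = 0"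
  have top: "w i = 0" if "i < m" for i using L[rule_format, of i] that unfolding row_elim_def by simp
  hence mid: "(\<Sum>l<m. R_of m a X $$ (i-m,l) * w l) = 0" for i by simp
  show "\<forall>i<m+a+b. w i = 0"
  proof (intro allI impI)
    fix i assume "i < m+a+b"
    hence "row_elim m a X (\<lambda>l _. w l) i 0 = 0" using L by blast
    thus "w i = 0" using mid by (simp add: row_elim_def split: if_splits)
  qed
next
  assume "\<forall>i<m+a+b. w i = 0"
  thus "\<forall>i<m+a+b. row_elim m a X (\<lambda>l _. w l) i 0 = 0" unfolding row_elim_def by auto
qed

context pqrs_normalised begin

lemma f_top_middle: assumes i: "i < m" and j: "m \<le> j" "j < m+a"
  shows "f i j = (\<Sum>l<m. X l j * f i l)"
proof -
  have "(\<Sum>l<b. Y l j * f i (m+a+l)) = 0"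
    using i by (intro sum.neutral) (auto simp: f_unit_cols)
  thus ?thesis using f_middle_cols[OF j] i by simp
qed

lemma f_middle_rows: assumes i: "m \<le> i" "i < m+a" and j: "j < m+a+b"
  shows "f i j = (\<Sum>l<m. cnj (X l i) * f l j)"
proof (cases "j < m+a")
  case True
  have z: "(\<Sum>l<b. Y l i * f j (m+a+l)) = 0"
    using True by (intro sum.neutral) (auto simp: f_unit_cols)
  have "f i j = cnj (f j i)" by (rule f_hermitian) (use i True in auto)
  also have "\<dots> = cnj (\<Sum>l<m. X l i * f j l)" using f_middle_cols[OF i, of j] z j by simp
  also have "\<dots> = (\<Sum>l<m. cnj (X l i) * cnj (f j l))" by simp
  also have "\<dots> = (\<Sum>l<m. cnj (X l i) * f l j)"
  proof (intro sum.cong refl)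
    fix l assume "l \<in> {..<m}"
    hence "f l j = cnj (f j l)" using True by (intro f_hermitian) auto
    thus "cnj (X l i) * cnj (f j l) = cnj (X l i) * f l j" by simp
  qed
  finally show ?thesis .
next
  case False
  have "f i j = 0" using f_unit_cols i j False by simp
  moreover have "(\<Sum>l<m. cnj (X l i) * f l j) = 0"
    using False j by (intro sum.neutral) (auto simp: f_unit_cols)
  ultimately show ?thesis by simp
qed

abbreviation "P_nf \<equiv> P_of m a b g"
abbreviation "Q_nf \<equiv> Q_of m a b g X"
abbreviation "R_nf \<equiv> R_of m a X"
abbreviation "S_nf \<equiv> S_of m f"

lemma nf_carriers: "P_nf \<in> carrier_mat m b" "Q_nf \<in> carrier_mat a b" "R_nf \<in> carrier_mat a m" "S_nf \<in> carrier_mat m m"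
  unfolding P_of_def Q_of_def R_of_def S_of_def by auto

lemma B_entry_top:
  assumes i: "i < m" and j: "j < m+a+b"
  shows "B_PQRS m a b P_nf Q_nf R_nf $$ (i,j) = g i j"
  using B_PQRS_index[OF _ j nf_carriers(1-3), of i] i j by (auto simp: g_unit_cols P_of_def)

lemma B_entry_middle:
  assumes i: "m \<le> i" "i < m+a" and j: "j < m+a+b"
  shows "B_PQRS m a b P_nf Q_nf R_nf $$ (i,j) = g i j + (\<Sum>l<m. R_nf $$ (i-m,l) * g l j)"
proof -
  note Bi = B_PQRS_index[OF _ j nf_carriers(1-3), of i]
  consider "j < m" | "m \<le> j" "j < m+a" | "m+a \<le> j" by linarith
  thus ?thesis
  proof cases
    case 1
    have "(\<Sum>l<m. R_nf $$ (i-m,l) * g l j) = (\<Sum>l<m. R_nf $$ (i-m,l) * (if l = j then 1 else 0))"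
      using 1 by (intro sum.cong refl) (simp add: g_unit_cols)
    also have "\<dots> = R_nf $$ (i-m, j)" using 1 by (simp add: sum_delta_mult)
    finally show ?thesis using Bi i j 1 by (auto simp: g_unit_cols)
  next
    case 2
    have "(\<Sum>l<m. R_nf $$ (i-m,l) * g l j) = 0" using 2 by (intro sum.neutral) (auto simp: g_unit_cols)
    thus ?thesis using Bi i j 2 by (auto simp: g_unit_cols)
  next
    case 3
    thus ?thesis using Bi i j unfolding Q_of_def by auto
  qed
qed

lemma B_entry_bottom:
  assumes i: "m+a \<le> i" "i < m+a+b" and j: "j < m+a+b"
  shows "B_PQRS m a b P_nf Q_nf R_nf $$ (i,j) = 0"
  using B_PQRS_index[OF _ j nf_carriers(1-3), of i] i by simp

lemma A_entry_top:
  assumes i: "i < m" and j: "j < m+a+b"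
  shows "A_PQRS m a b P_nf Q_nf R_nf S_nf $$ (i,j) = - f i j"
proof -
  note Ai = A_PQRS_index[OF _ j nf_carriers, of i]
  consider "j < m" | "m \<le> j" "j < m+a" | "m+a \<le> j" by linarith
  thus ?thesis
  proof cases
    case 1
    thus ?thesis using Ai i by (simp add: S_of_def)
  next
    case 2
    have "(\<Sum>l<m. S_nf $$ (i,l) * cnj (R_nf $$ (j-m,l))) = (\<Sum>l<m. X l j * f i l)"
      using i 2 by (intro sum.cong refl) (auto simp: S_of_def R_of_def)
    thus ?thesis using Ai i 2 f_top_middle[OF i 2] by simp
  next
    case 3
    thus ?thesis using Ai i j by (simp add: f_unit_cols)
  qed
qed

lemma A_entry_middle:
  assumes i: "m \<le> i" "i < m+a" and j: "j < m+a+b"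
  shows "A_PQRS m a b P_nf Q_nf R_nf S_nf $$ (i,j) = 0"
  using A_PQRS_index[OF _ j nf_carriers, of i] i by simp

lemma A_entry_bottom:
  assumes i: "m+a \<le> i" "i < m+a+b" and j: "j < m+a+b"
  shows "A_PQRS m a b P_nf Q_nf R_nf S_nf $$ (i,j) = f i j"
proof -
  note Ai = A_PQRS_index[OF _ j nf_carriers, of i]
  consider "j < m" | "m \<le> j" "j < m+a" | "m+a \<le> j" by linarith
  thus ?thesis
  proof cases
    case 1
    thus ?thesis using Ai i by (simp add: P_of_def f_g_adjoint)
  next
    case 2
    have "(\<Sum>l<m. R_nf $$ (j-m,l) * P_nf $$ (l,i-m-a)) = (\<Sum>l<m. R_nf $$ (j-m,l) * g l i)"
      using i by (intro sum.cong refl) (simp add: P_of_def)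
    moreover have "Q_nf $$ (j-m, i-m-a) = g j i + (\<Sum>l<m. R_nf $$ (j-m,l) * g l i)"
      unfolding Q_of_def using i 2 by auto
    ultimately show ?thesis using Ai i 2 by (simp add: f_g_adjoint)
  next
    case 3
    thus ?thesis using Ai i j by (simp add: f_unit_cols)
  qed
qed

lemma B_PQRS_entry:
  assumes i: "i < m+a+b" and j: "j < m+a+b"
  shows "B_PQRS m a b P_nf Q_nf R_nf $$ (i,j) = row_elim m a X g i j"
  using B_entry_top[OF _ j] B_entry_middle[OF _ _ j] B_entry_bottom[OF _ _ j] i j
  by (auto simp: row_elim_def g_zero_rows)

lemma A_PQRS_entry:
  assumes i: "i < m+a+b" and j: "j < m+a+b"
  shows "A_PQRS m a b P_nf Q_nf R_nf S_nf $$ (i,j) = - row_elim m a X f i j"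
proof -
  have "row_elim m a X f i j = 0" if "m \<le> i" "i < m+a"
    using that f_middle_rows[of i j] j by (simp add: row_elim_def R_of_def sum_negf)
  thus ?thesis using A_entry_top[OF _ j] A_entry_middle[OF _ _ j] A_entry_bottom[OF _ _ j] i
    by (auto simp: row_elim_def)
qed

lemma kernel_top_to_middle:
  assumes e: "\<And>k. k < m \<Longrightarrow> (\<Sum>l<m. f k l * v l) = 0" and i: "m \<le> i" "i < m+a"
  shows "(\<Sum>l<m. f i l * v l) = 0"
proof -
  have "(\<Sum>l<m. f i l * v l) = (\<Sum>l<m. (\<Sum>k<m. cnj (X k i) * f k l) * v l)"
    using i f_middle_rows by (intro sum.cong refl) auto
  also have "\<dots> = (\<Sum>l<m. \<Sum>k<m. cnj (X k i) * (f k l * v l))"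
    by (simp add: sum_distrib_right mult.assoc)
  also have "\<dots> = (\<Sum>k<m. \<Sum>l<m. cnj (X k i) * (f k l * v l))"
    by (rule sum.swap)
  also have "\<dots> = (\<Sum>k<m. cnj (X k i) * (\<Sum>l<m. f k l * v l))"
    by (simp add: sum_distrib_left)
  also have "\<dots> = 0" using e by simp
  finally show ?thesis .
qed

text \<open>For invertibility, a kernel vector v of S,
  extended by minus the corresponding last block rows of f, is a coefficient vector
  annihilating the first and last columns of f; independence forces v = 0.\<close>

lemma S_adj: "mat_adjoint S_nf = S_nf"
proof (rule eq_matI)
  fix i j assume i: "i < dim_row S_nf" and j: "j < dim_col S_nf"
  hence i': "i < m" and j': "j < m" by (auto simp: S_of_def)
  have "f i j = cnj (f j i)" by (rule f_hermitian) (use i' j' in auto)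
  thus "mat_adjoint S_nf $$ (i,j) = S_nf $$ (i,j)" using i' j' by (simp add: S_of_def)
qed (auto simp: S_of_def)

lemma S_det_nonzero: "det S_nf \<noteq> 0"
proof (rule det_nonzero_if_trivial_kernel[OF nf_carriers(4)])
  fix v :: "complex vec" assume v: "v \<in> carrier_vec m" and Sv: "S_nf *\<^sub>v v = 0\<^sub>v m"
  have e: "(\<Sum>l<m. f i l * v $ l) = 0" if i: "i < m" for i
  proof -
    have "(S_nf *\<^sub>v v) $ i = (\<Sum>l<m. S_nf $$ (i,l) * v $ l)" by (rule mat_vec_index[OF nf_carriers(4) v i])
    also have "\<dots> = - (\<Sum>l<m. f i l * v $ l)" using i by (simp add: S_of_def sum_negf[symmetric])
    finally show ?thesis using Sv i by simp
  qed
  define y where "y = (\<lambda>k. (\<Sum>l<m. f (m+a+k) l * v $ l))"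
  define V where "V = (\<lambda>l. if l < m then v $ l else - y (l - m - a))"
  have "\<forall>i<m+a+b. (\<Sum>l<m. V l * f i l) + (\<Sum>l<b. V (m+a+l) * f i (m+a+l)) = 0"
  proof (intro allI impI)
    fix i assume i: "i < m+a+b"
    have s1: "(\<Sum>l<m. V l * f i l) = (\<Sum>l<m. f i l * v $ l)" unfolding V_def by (intro sum.cong) auto
    have s2: "(\<Sum>l<b. V (m+a+l) * f i (m+a+l)) = - (\<Sum>l<b. y l * (if i = m+a+l then 1 else 0))"
      unfolding V_def using i by (auto simp: f_unit_cols sum_negf[symmetric] intro!: sum.cong)
    show "(\<Sum>l<m. V l * f i l) + (\<Sum>l<b. V (m+a+l) * f i (m+a+l)) = 0"
    proof (cases "i < m+a")
      case True
      have "(\<Sum>l<b. y l * (if i = m+a+l then 1 else 0)) = 0" using True by (intro sum.neutral) auto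
      moreover have "(\<Sum>l<m. f i l * v $ l) = 0"
        using e kernel_top_to_middle[of "\<lambda>l. v $ l" i] True by (cases "i < m") auto
      ultimately show ?thesis using s1 s2 by simp
    next
      case False
      then obtain k where k: "i = m+a+k" "k < b" using i by (metis add_diff_inverse_nat add_less_cancel_left)
      have "(\<Sum>l<b. y l * (if i = m+a+l then 1 else 0)) = y k"
      proof -
        have "(\<Sum>l<b. y l * (if i = m+a+l then 1 else 0)) = (\<Sum>l<b. y l * (if l = k then 1 else 0))"
          using k by (intro sum.cong refl) auto
        thus ?thesis using k by (simp add: sum_delta_mult)
      qed
      moreover have "(\<Sum>l<m. f i l * v $ l) = y k" unfolding y_def k(1) ..
      ultimately show ?thesis using s1 s2 by simp
    qed
  qed
  from f_indep[OF this] have "\<forall>l<m. V l = 0" .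
  hence "\<forall>l<m. v $ l = 0" unfolding V_def by auto
  thus "v = 0\<^sub>v m" using v by (intro eq_vecI) auto
qed

lemma S_inv: "invertible_mat S_nf"
proof -
  obtain C where C: "C \<in> carrier_mat m m" "C * S_nf = 1\<^sub>m m" "S_nf * C = 1\<^sub>m m"
    using inverse_if_det_nonzero[OF nf_carriers(4) S_det_nonzero] by blast
  thus ?thesis unfolding invertible_mat_def inverts_mat_def using nf_carriers(4)
    by (intro conjI exI[of _ C]) auto
qed

lemma nf_ok: "PQRS_ok m a b P_nf Q_nf R_nf S_nf"
  unfolding PQRS_ok_def using nf_carriers S_adj S_inv by auto

lemma row_elim_sum: "(\<Sum>j<N. row_elim m a X h i j * u j) = row_elim m a X (\<lambda>l _. \<Sum>j<N. h l j * u j) i 0"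
proof -
  have "(\<Sum>j<N. (h i j + (\<Sum>l<m. R_nf $$ (i-m,l) * h l j)) * u j)
      = (\<Sum>j<N. h i j * u j) + (\<Sum>l<m. R_nf $$ (i-m,l) * (\<Sum>j<N. h l j * u j))"
    by (simp add: distrib_right sum.distrib sum_distrib_left sum_distrib_right mult.assoc
        sum.swap[of _ "{..<N}" "{..<m}"])
  thus ?thesis unfolding row_elim_def by (auto simp: sum_negf[symmetric])
qed

lemma row_elim_add: "row_elim m a X (\<lambda>l j. h1 l j + h2 l j) i j = row_elim m a X h1 i j + row_elim m a X h2 i j"
  unfolding row_elim_def by (auto simp: distrib_left sum.distrib algebra_simps)

lemma PQRS_residual:
  assumes u: "u \<in> carrier_vec (m+a+b)" and u': "u' \<in> carrier_vec (m+a+b)" and i: "i < m+a+b"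
  shows "(B_PQRS m a b P_nf Q_nf R_nf *\<^sub>v u') $ i - (A_PQRS m a b P_nf Q_nf R_nf S_nf *\<^sub>v u) $ i
    = row_elim m a X (\<lambda>l _. \<Sum>j<m+a+b. f l j * u $ j + g l j * u' $ j) i 0"
proof -
  let ?n = "m+a+b"
  have Bc: "B_PQRS m a b P_nf Q_nf R_nf \<in> carrier_mat ?n ?n" unfolding B_PQRS_def block3_def by simp
  have Ac: "A_PQRS m a b P_nf Q_nf R_nf S_nf \<in> carrier_mat ?n ?n" unfolding A_PQRS_def block3_def by simp
  have "(B_PQRS m a b P_nf Q_nf R_nf *\<^sub>v u') $ i = (\<Sum>j<?n. row_elim m a X g i j * u' $ j)"
    unfolding mat_vec_index[OF Bc u' i] using i by (intro sum.cong refl) (simp add: B_PQRS_entry)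
  also have "\<dots> = row_elim m a X (\<lambda>l _. \<Sum>j<?n. g l j * u' $ j) i 0" by (rule row_elim_sum)
  finally have Bu': "(B_PQRS m a b P_nf Q_nf R_nf *\<^sub>v u') $ i = row_elim m a X (\<lambda>l _. \<Sum>j<?n. g l j * u' $ j) i 0" .
  have "(A_PQRS m a b P_nf Q_nf R_nf S_nf *\<^sub>v u) $ i = - (\<Sum>j<?n. row_elim m a X f i j * u $ j)"
    unfolding mat_vec_index[OF Ac u i] sum_negf[symmetric] using i
    by (intro sum.cong refl) (simp add: A_PQRS_entry)
  also have "\<dots> = - row_elim m a X (\<lambda>l _. \<Sum>j<?n. f l j * u $ j) i 0" by (simp add: row_elim_sum)
  finally have Au: "(A_PQRS m a b P_nf Q_nf R_nf S_nf *\<^sub>v u) $ i = - row_elim m a X (\<lambda>l _. \<Sum>j<?n. f l j * u $ j) i 0" .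
  have "row_elim m a X (\<lambda>l _. \<Sum>j<?n. f l j * u $ j + g l j * u' $ j) i 0
      = row_elim m a X (\<lambda>l j. (\<Sum>j<?n. f l j * u $ j) + (\<Sum>j<?n. g l j * u' $ j)) i 0"
    by (simp add: sum.distrib)
  also have "\<dots> = row_elim m a X (\<lambda>l _. \<Sum>j<?n. f l j * u $ j) i 0
      + row_elim m a X (\<lambda>l _. \<Sum>j<?n. g l j * u' $ j) i 0"
    by (rule row_elim_add)
  finally show ?thesis using Bu' Au by simp
qed

lemma PQRS_system_iff:
  assumes u: "u \<in> carrier_vec (m+a+b)" and u': "u' \<in> carrier_vec (m+a+b)"
  shows "(B_PQRS m a b P_nf Q_nf R_nf *\<^sub>v u' = A_PQRS m a b P_nf Q_nf R_nf S_nf *\<^sub>v u) \<longleftrightarrow>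
    (\<forall>i<m+a+b. (\<Sum>j<m+a+b. f i j * u $ j + g i j * u' $ j) = 0)"
proof -
  let ?n = "m+a+b" and ?w = "\<lambda>l. \<Sum>j<m+a+b. f l j * u $ j + g l j * u' $ j"
  have "dim_vec (B_PQRS m a b P_nf Q_nf R_nf *\<^sub>v u') = ?n" "dim_vec (A_PQRS m a b P_nf Q_nf R_nf S_nf *\<^sub>v u) = ?n"
    unfolding A_PQRS_def B_PQRS_def block3_def by simp_all
  hence "(B_PQRS m a b P_nf Q_nf R_nf *\<^sub>v u' = A_PQRS m a b P_nf Q_nf R_nf S_nf *\<^sub>v u) \<longleftrightarrow>
      (\<forall>i<?n. (B_PQRS m a b P_nf Q_nf R_nf *\<^sub>v u') $ i - (A_PQRS m a b P_nf Q_nf R_nf S_nf *\<^sub>v u) $ i = 0)"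
    by (auto simp: vec_eq_iff)
  also have "\<dots> \<longleftrightarrow> (\<forall>i<?n. row_elim m a X (\<lambda>l _. ?w l) i 0 = 0)"
    using PQRS_residual[OF u u'] by simp
  also have "\<dots> \<longleftrightarrow> (\<forall>i<?n. ?w i = 0)" by (rule row_elim_zero_iff)
  finally show ?thesis .
qed

end

section \<open>Existence of the PQRS form\<close>

lemma block_permutation:
  assumes U: "J1 \<union> J2 \<union> J3 = {..<m+a+b}" and D: "J1 \<inter> J2 = {}" "J1 \<inter> J3 = {}" "J2 \<inter> J3 = {}"
    and cards: "card J1 = m" "card J2 = a" "card J3 = b"
  obtains p where "p permutes {..<m+a+b}" "bij_betw p {..<m} J1"
    "bij_betw (\<lambda>k. p (m+k)) {..<a} J2" "bij_betw (\<lambda>k. p (m+a+k)) {..<b} J3"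
proof -
  have fin: "finite J1" "finite J2" "finite J3" using U by (auto intro: finite_subset)
  define xs1 where "xs1 = sorted_list_of_set J1"
  define xs2 where "xs2 = sorted_list_of_set J2"
  define xs3 where "xs3 = sorted_list_of_set J3"
  define xs where "xs = xs1 @ xs2 @ xs3"
  have len: "length xs1 = m" "length xs2 = a" "length xs3 = b"
    using cards unfolding xs1_def xs2_def xs3_def by simp_all
  have sets: "set xs1 = J1" "set xs2 = J2" "set xs3 = J3"
    using fin unfolding xs1_def xs2_def xs3_def by simp_all
  have dist: "distinct xs1" "distinct xs2" "distinct xs3" unfolding xs1_def xs2_def xs3_def by simp_all
  have "distinct xs" unfolding xs_def using dist sets D by auto
  moreover have "set xs = {..<m+a+b}" unfolding xs_def using sets U by auto
  moreover have "length xs = m+a+b" unfolding xs_def using len by simp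
  ultimately have bij: "bij_betw ((!) xs) {..<m+a+b} {..<m+a+b}" by (intro bij_betw_nth) auto
  define p where "p i = (if i < m+a+b then xs ! i else i)" for i
  show ?thesis
  proof
    have "bij_betw p {..<m+a+b} {..<m+a+b}" using bij by (rule bij_betw_cong[THEN iffD1, rotated]) (simp add: p_def)
    thus "p permutes {..<m+a+b}" by (rule bij_imp_permutes) (simp add: p_def)
    have "bij_betw ((!) xs1) {..<m} J1" using dist sets len by (intro bij_betw_nth) auto
    thus "bij_betw p {..<m} J1"
      by (rule bij_betw_cong[THEN iffD1, rotated]) (simp add: p_def xs_def nth_append len)
    have "bij_betw ((!) xs2) {..<a} J2" using dist sets len by (intro bij_betw_nth) auto
    thus "bij_betw (\<lambda>k. p (m+k)) {..<a} J2"
      by (rule bij_betw_cong[THEN iffD1, rotated]) (simp add: p_def xs_def nth_append len)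
    have "bij_betw ((!) xs3) {..<b} J3" using dist sets len by (intro bij_betw_nth) auto
    thus "bij_betw (\<lambda>k. p (m+a+k)) {..<b} J3"
      by (rule bij_betw_cong[THEN iffD1, rotated]) (simp add: p_def xs_def nth_append len)
  qed
qed

locale coupling_normalisation =
  fixes n m a b :: nat and A B C :: "complex mat" and J1 J2 J3 :: "nat set" and p :: "nat \<Rightarrow> nat"
  assumes adm: "admissible n A B" and nsum: "n = m + a + b"
    and C: "C \<in> carrier_mat n n" and C_inj: "\<And>v. v \<in> carrier_vec n \<Longrightarrow> C *\<^sub>v v = 0\<^sub>v n \<Longrightarrow> v = 0\<^sub>v n"
    and CB_unit: "\<forall>x<n. \<forall>k\<in>J1 \<union> J2. (C * B) $$ (x,k) = (if x = k then 1 else 0)"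
    and CA_unit: "\<forall>x<n. \<forall>k\<in>J3. (C * A) $$ (x,k) = (if x = k then 1 else 0)"
    and spB: "spans_cols B (J1 \<union> J2)" and indA: "indep_cols A (J1 \<union> J3)" and spA: "spans_cols A (J1 \<union> J3)"
    and p: "p permutes {..<n}" and p1: "bij_betw p {..<m} J1"
    and p2: "bij_betw (\<lambda>k. p (m+k)) {..<a} J2" and p3: "bij_betw (\<lambda>k. p (m+a+k)) {..<b} J3"
begin

definition f :: "nat \<Rightarrow> nat \<Rightarrow> complex" where "f i j = (C * A) $$ (p i, p j)"
definition g :: "nat \<Rightarrow> nat \<Rightarrow> complex" where "g i j = (C * B) $$ (p i, p j)"

lemma A: "A \<in> carrier_mat n n" and B: "B \<in> carrier_mat n n"
  using adm unfolding admissible_def by auto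

lemma p_bij: "bij_betw p {..<n} {..<n}" and p_range: "i < n \<Longrightarrow> p i < n"
  and p_eq_iff: "i < n \<Longrightarrow> j < n \<Longrightarrow> p i = p j \<longleftrightarrow> i = j"
  using permutes_imp_bij[OF p] permutes_in_image[OF p] permutes_inj[OF p] by (auto dest: injD)

lemma p_blocks:
  "i < m \<Longrightarrow> p i \<in> J1" "m \<le> i \<Longrightarrow> i < m+a \<Longrightarrow> p i \<in> J2" "m+a \<le> i \<Longrightarrow> i < n \<Longrightarrow> p i \<in> J3"
proof -
  show "i < m \<Longrightarrow> p i \<in> J1" using p1 by (auto simp: bij_betw_def)
  show "p i \<in> J2" if "m \<le> i" "i < m+a"
    using p2 that bij_betw_apply[OF p2, of "i-m"] by simp
  show "p i \<in> J3" if "m+a \<le> i" "i < n"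
    using p3 that nsum bij_betw_apply[OF p3, of "i-m-a"] by simp
qed

lemma J_sub: "J1 \<union> J2 \<union> J3 \<subseteq> {..<n}"
  using p_range p_blocks bij_betw_imp_surj_on[OF p1] bij_betw_imp_surj_on[OF p2] bij_betw_imp_surj_on[OF p3]
    nsum by fastforce

lemma J3_disjoint: "J1 \<inter> J3 = {}" "J2 \<inter> J3 = {}"
  using p_blocks p_eq_iff bij_betw_imp_surj_on[OF p1] bij_betw_imp_surj_on[OF p2]
    bij_betw_imp_surj_on[OF p3] nsum by (fastforce simp: image_iff)+

lemma sum_J13: "(\<Sum>x\<in>J1 \<union> J3. \<phi> x) = (\<Sum>l<m. \<phi> (p l)) + (\<Sum>l<b. \<phi> (p (m+a+l)))"
proof -
  have "(\<Sum>x\<in>J1 \<union> J3. \<phi> x) = (\<Sum>x\<in>J1. \<phi> x) + (\<Sum>x\<in>J3. \<phi> x)"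
    using J_sub J3_disjoint by (intro sum.union_disjoint) (auto intro: finite_subset)
  also have "\<dots> = (\<Sum>l<m. \<phi> (p l)) + (\<Sum>l<b. \<phi> (p (m+a+l)))"
    using sum.reindex_bij_betw[OF p1, of \<phi>] sum.reindex_bij_betw[OF p3, of \<phi>] by simp
  finally show ?thesis .
qed

text \<open>The rows of C B indexed by J3 vanish, since the columns of C B on J1 \<union> J2 are
  unit vectors outside J3 and span all columns.\<close>

lemma CB_zero_rows:
  assumes x: "x \<in> J3" and k: "k < n"
  shows "(C * B) $$ (x,k) = 0"
proof -
  from spB[unfolded spans_cols_def] k B obtain c where c: "\<forall>l<n. B $$ (l,k) = (\<Sum>j\<in>J1 \<union> J2. c j * B $$ (l,j))"
    by auto
  have xn: "x < n" using x J_sub by auto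
  have "(C * B) $$ (x,k) = (\<Sum>j\<in>J1 \<union> J2. c j * (C * B) $$ (x,j))"
    by (rule mult_column_combination[OF C B _ xn c k]) (use J_sub in auto)
  also have "\<dots> = 0"
  proof (rule sum.neutral, rule ballI)
    fix j assume j: "j \<in> J1 \<union> J2"
    have "x \<noteq> j" using x j J3_disjoint by blast
    thus "c j * (C * B) $$ (x,j) = 0" using CB_unit xn j by simp
  qed
  finally show ?thesis .
qed

lemma g_unit_cols: "i < m+a+b \<Longrightarrow> j < m+a \<Longrightarrow> g i j = (if i = j then 1 else 0)"
proof -
  assume i: "i < m+a+b" and j: "j < m+a"
  have "p j \<in> J1 \<union> J2" using p_blocks j by (cases "j < m") auto
  thus ?thesis unfolding g_def using CB_unit p_range p_eq_iff i j nsum by auto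
qed

lemma g_zero_rows: "m+a \<le> i \<Longrightarrow> i < m+a+b \<Longrightarrow> j < m+a+b \<Longrightarrow> g i j = 0"
  unfolding g_def using CB_zero_rows p_blocks p_range nsum by auto

lemma f_unit_cols: "i < m+a+b \<Longrightarrow> m+a \<le> j \<Longrightarrow> j < m+a+b \<Longrightarrow> f i j = (if i = j then 1 else 0)"
  unfolding f_def using CA_unit p_blocks p_range p_eq_iff nsum by auto

lemma gram_hermitian:
  assumes x: "x < n" and y: "y < n"
  shows "(C * A * mat_adjoint (C * B)) $$ (x,y) = cnj ((C * A * mat_adjoint (C * B)) $$ (y,x))"
proof -
  let ?M = "C * A * mat_adjoint (C * B)"
  have "mat_adjoint ?M = ?M"
    by (rule self_adjoint_common_left_factor[OF A B C]) (use adm in \<open>auto simp: admissible_def\<close>)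
  hence "?M $$ (x,y) = mat_adjoint ?M $$ (x,y)" by simp
  also have "\<dots> = cnj (?M $$ (y,x))" using C A B x y by simp
  finally show ?thesis .
qed

lemma gram_entry_sum:
  assumes i: "i < n" and j: "j < n"
  shows "(C * A * mat_adjoint (C * B)) $$ (p i, p j) = (\<Sum>k<n. f i k * cnj (g j k))"
proof -
  have CA: "C * A \<in> carrier_mat n n" and CB: "C * B \<in> carrier_mat n n" using C A B by auto
  have "(C * A * mat_adjoint (C * B)) $$ (p i, p j) = (\<Sum>k<n. (C * A) $$ (p i,k) * mat_adjoint (C * B) $$ (k, p j))"
    by (rule mat_mult_index[OF CA adj_carrier[OF CB] p_range[OF i] p_range[OF j]])
  also have "\<dots> = (\<Sum>k<n. (C * A) $$ (p i,k) * cnj ((C * B) $$ (p j,k)))"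
    using B C p_range[OF j] by (intro sum.cong) auto
  also have "\<dots> = (\<Sum>k<n. f i k * cnj (g j k))" unfolding f_def g_def
    using sum.reindex_bij_betw[OF p_bij, of "\<lambda>k. (C * A) $$ (p i,k) * cnj ((C * B) $$ (p j,k))"] by simp
  finally show ?thesis .
qed

lemma gram_entry:
  assumes i: "i < n" and j: "j < m+a"
  shows "(C * A * mat_adjoint (C * B)) $$ (p i, p j) = f i j + (\<Sum>k<b. f i (m+a+k) * cnj (g j (m+a+k)))"
proof -
  have "(C * A * mat_adjoint (C * B)) $$ (p i, p j)
      = (\<Sum>k<m+a. f i k * cnj (g j k)) + (\<Sum>k<b. f i (m+a+k) * cnj (g j (m+a+k)))"
    using gram_entry_sum[OF i] j nsum by (simp add: sum_lessThan_add)
  also have "(\<Sum>k<m+a. f i k * cnj (g j k)) = (\<Sum>k<m+a. f i k * (if j = k then 1 else 0))"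
    using j by (intro sum.cong refl) (simp add: g_unit_cols)
  also have "\<dots> = f i j" using j by (simp add: sum_delta_mult')
  finally show ?thesis .
qed

lemma f_hermitian: "i < m+a \<Longrightarrow> j < m+a \<Longrightarrow> f i j = cnj (f j i)"
proof -
  assume i: "i < m+a" and j: "j < m+a"
  have vanish: "(\<Sum>k<b. f x (m+a+k) * cnj (g y (m+a+k))) = 0" if "x < m+a" for x y
    using that by (intro sum.neutral) (auto simp: f_unit_cols)
  have "f i j = (C * A * mat_adjoint (C * B)) $$ (p i, p j)" using gram_entry[of i j] vanish i j nsum by simp
  also have "\<dots> = cnj ((C * A * mat_adjoint (C * B)) $$ (p j, p i))"
    using gram_hermitian[OF p_range p_range, of i j] i j nsum by simp
  also have "(C * A * mat_adjoint (C * B)) $$ (p j, p i) = f j i"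
    using gram_entry[of j i] vanish i j nsum by simp
  finally show ?thesis .
qed

lemma f_g_adjoint: "m+a \<le> i \<Longrightarrow> i < m+a+b \<Longrightarrow> j < m+a \<Longrightarrow> f i j = - cnj (g j i)"
proof -
  assume i: "m+a \<le> i" "i < m+a+b" and j: "j < m+a"
  obtain k0 where k0: "i = m+a+k0" "k0 < b" using i by (metis add_diff_inverse_nat add_less_cancel_left not_less)
  have "(\<Sum>k<b. f i (m+a+k) * cnj (g j (m+a+k))) = (\<Sum>k<b. cnj (g j (m+a+k)) * (if k0 = k then 1 else 0))"
    using i k0 by (intro sum.cong refl) (auto simp: f_unit_cols)
  also have "\<dots> = cnj (g j i)" using k0 by (simp add: sum_delta_mult')
  finally have "(C * A * mat_adjoint (C * B)) $$ (p i, p j) = f i j + cnj (g j i)"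
    using gram_entry[of i j] i j nsum by simp
  moreover have "(C * A * mat_adjoint (C * B)) $$ (p j, p i) = 0"
    using gram_entry_sum[of j i] i j nsum by (simp add: g_zero_rows)
  ultimately have "f i j + cnj (g j i) = 0" using gram_hermitian[of "p i" "p j"] p_range i j nsum by simp
  thus ?thesis by (simp add: add_eq_0_iff)
qed

definition coeff :: "nat \<Rightarrow> nat \<Rightarrow> complex" where
  "coeff k = (SOME c. \<forall>l<n. A $$ (l,k) = (\<Sum>x\<in>J1 \<union> J3. c x * A $$ (l,x)))"

lemma coeff:
  assumes k: "k < n"
  shows "\<forall>l<n. A $$ (l,k) = (\<Sum>x\<in>J1 \<union> J3. coeff k x * A $$ (l,x))"
proof -
  have "\<exists>c. \<forall>l<n. A $$ (l,k) = (\<Sum>x\<in>J1 \<union> J3. c x * A $$ (l,x))"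
    using spA A k unfolding spans_cols_def by simp
  thus ?thesis unfolding coeff_def by (rule someI_ex)
qed

definition X :: "nat \<Rightarrow> nat \<Rightarrow> complex" where "X l j = coeff (p j) (p l)"
definition Y :: "nat \<Rightarrow> nat \<Rightarrow> complex" where "Y l j = coeff (p j) (p (m+a+l))"

lemma f_middle_cols: "m \<le> j \<Longrightarrow> j < m+a \<Longrightarrow> i < m+a+b \<Longrightarrow>
    f i j = (\<Sum>l<m. X l j * f i l) + (\<Sum>l<b. Y l j * f i (m+a+l))"
proof -
  assume j: "m \<le> j" "j < m+a" and i: "i < m+a+b"
  have pjn: "p j < n" "p i < n" using p_range j i nsum by auto
  have "(C * A) $$ (p i, p j) = (\<Sum>x\<in>J1 \<union> J3. coeff (p j) x * (C * A) $$ (p i, x))"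
    by (rule mult_column_combination[OF C A _ pjn(2) coeff[OF pjn(1)] pjn(1)]) (use J_sub in auto)
  thus ?thesis unfolding sum_J13 f_def X_def Y_def .
qed

lemma f_indep:
  assumes V: "\<forall>i<m+a+b. (\<Sum>l<m. V l * f i l) + (\<Sum>l<b. V (m+a+l) * f i (m+a+l)) = 0"
  shows "\<forall>l<m. V l = 0"
proof -
  have "J1 \<union> J3 \<subseteq> {..<n}" using J_sub by auto
  hence ind: "indep_cols (C * A) (J1 \<union> J3)" using indep_cols_mult_injective[OF C C_inj A _ indA] by blast
  define c where "c = (\<lambda>x. V (inv_into {..<n} p x))"
  have cp: "c (p l) = V l" if "l < n" for l
    unfolding c_def using bij_betw_imp_inj_on[OF p_bij] that by (simp add: inv_into_f_f)
  have "\<forall>y<dim_row (C * A). (\<Sum>x\<in>J1 \<union> J3. c x * (C * A) $$ (y,x)) = 0"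
  proof (intro allI impI)
    fix y assume "y < dim_row (C * A)"
    hence y: "y < n" using C by simp
    have "y \<in> p ` {..<n}" using y bij_betw_imp_surj_on[OF p_bij] by simp
    then obtain i where i: "i < n" "y = p i" by auto
    have "(\<Sum>x\<in>J1 \<union> J3. c x * (C * A) $$ (y,x)) = (\<Sum>l<m. V l * f i l) + (\<Sum>l<b. V (m+a+l) * f i (m+a+l))"
      unfolding sum_J13 f_def i(2) using cp nsum by simp
    thus "(\<Sum>x\<in>J1 \<union> J3. c x * (C * A) $$ (y,x)) = 0" using V i nsum by simp
  qed
  moreover from ind have "(\<forall>y<dim_row (C * A). (\<Sum>x\<in>J1 \<union> J3. c x * (C * A) $$ (y,x)) = 0)
      \<longrightarrow> (\<forall>x\<in>J1 \<union> J3. c x = 0)" unfolding indep_cols_def by (rule spec)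
  ultimately have c0: "\<forall>x\<in>J1 \<union> J3. c x = 0" by blast
  show ?thesis
  proof (intro allI impI)
    fix l assume l: "l < m"
    thus "V l = 0" using c0 cp[of l] p_blocks(1)[OF l] nsum by simp
  qed
qed

lemma normalised: "pqrs_normalised m a b f g X Y"
  by unfold_locales (fact g_unit_cols g_zero_rows f_unit_cols f_hermitian f_g_adjoint f_middle_cols f_indep)+

lemma solutions_transfer:
  assumes \<Psi>: "\<Psi> \<in> carrier_vec n" and \<Psi>': "\<Psi>' \<in> carrier_vec n"
  shows "(A *\<^sub>v \<Psi> + B *\<^sub>v \<Psi>' = 0\<^sub>v n) \<longleftrightarrow>
    (\<forall>i<m+a+b. (\<Sum>j<m+a+b. f i j * perm_vec p \<Psi> $ j + g i j * perm_vec p \<Psi>' $ j) = 0)"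
proof -
  have CA: "C * A \<in> carrier_mat n n" and CB: "C * B \<in> carrier_mat n n" using C A B by auto
  define E where "E = C *\<^sub>v (A *\<^sub>v \<Psi> + B *\<^sub>v \<Psi>')"
  have E: "E \<in> carrier_vec n" unfolding E_def carrier_vec_def using C by simp
  have "E = (C * A) *\<^sub>v \<Psi> + (C * B) *\<^sub>v \<Psi>'"
    unfolding E_def using mult_add_distrib_mat_vec[OF C] assoc_mult_mat_vec[OF C A \<Psi>]
      assoc_mult_mat_vec[OF C B \<Psi>'] A B \<Psi> \<Psi>' by simp
  hence E_index: "E $ y = (\<Sum>k<n. (C * A) $$ (y,k) * \<Psi> $ k + (C * B) $$ (y,k) * \<Psi>' $ k)" if "y < n" for y
    using mat_vec_index[OF CA \<Psi> that] mat_vec_index[OF CB \<Psi>' that] carrier_matD[OF CB] that by (simp add: sum.distrib)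
  have E_p: "E $ p i = (\<Sum>j<m+a+b. f i j * perm_vec p \<Psi> $ j + g i j * perm_vec p \<Psi>' $ j)"
    if i: "i < n" for i
  proof -
    have "E $ p i = (\<Sum>k<n. (C * A) $$ (p i,k) * \<Psi> $ k + (C * B) $$ (p i,k) * \<Psi>' $ k)"
      using E_index p_range[OF i] by simp
    also have "\<dots> = (\<Sum>j<n. (C * A) $$ (p i,p j) * \<Psi> $ p j + (C * B) $$ (p i,p j) * \<Psi>' $ p j)"
      using sum.reindex_bij_betw[OF p_bij, of "\<lambda>k. (C * A) $$ (p i,k) * \<Psi> $ k + (C * B) $$ (p i,k) * \<Psi>' $ k"]
      by simp
    also have "\<dots> = (\<Sum>j<m+a+b. f i j * perm_vec p \<Psi> $ j + g i j * perm_vec p \<Psi>' $ j)"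
      using \<Psi> \<Psi>' nsum by (simp add: f_def g_def perm_vec_def)
    finally show ?thesis .
  qed
  have "(A *\<^sub>v \<Psi> + B *\<^sub>v \<Psi>' = 0\<^sub>v n) \<longleftrightarrow> E = 0\<^sub>v n"
    unfolding E_def using C_inj[of "A *\<^sub>v \<Psi> + B *\<^sub>v \<Psi>'"] A B \<Psi> \<Psi>' C by auto
  also have "\<dots> \<longleftrightarrow> (\<forall>y\<in>p ` {..<n}. E $ y = 0)"
    using E bij_betw_imp_surj_on[OF p_bij] by (auto simp: vec_eq_iff)
  also have "\<dots> \<longleftrightarrow> (\<forall>i<n. E $ p i = 0)" by auto
  finally show ?thesis using E_p nsum by simp
qed

lemma PQRS_read_off:
  "PQRS_ok m a b (P_of m a b g) (Q_of m a b g X) (R_of m a X) (S_of m f)"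
  "PQRS_equiv n A B p m a b (P_of m a b g) (Q_of m a b g X) (R_of m a X) (S_of m f)"
proof -
  interpret pqrs_normalised m a b f g X Y by (rule normalised)
  show "PQRS_ok m a b (P_of m a b g) (Q_of m a b g X) (R_of m a X) (S_of m f)" by (rule nf_ok)
  show "PQRS_equiv n A B p m a b (P_of m a b g) (Q_of m a b g X) (R_of m a X) (S_of m f)"
    unfolding PQRS_equiv_def
  proof (intro ballI)
    fix \<Psi> \<Psi>' :: "complex vec" assume \<Psi>: "\<Psi> \<in> carrier_vec n" and \<Psi>': "\<Psi>' \<in> carrier_vec n"
    have "perm_vec p \<Psi> \<in> carrier_vec (m+a+b)" "perm_vec p \<Psi>' \<in> carrier_vec (m+a+b)"
      using \<Psi> \<Psi>' nsum unfolding perm_vec_def by auto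
    thus "(A *\<^sub>v \<Psi> + B *\<^sub>v \<Psi>' = 0\<^sub>v n) \<longleftrightarrow>
        (B_PQRS m a b P_nf Q_nf R_nf *\<^sub>v perm_vec p \<Psi>' = A_PQRS m a b P_nf Q_nf R_nf S_nf *\<^sub>v perm_vec p \<Psi>)"
      using solutions_transfer[OF \<Psi> \<Psi>'] PQRS_system_iff by simp
  qed
qed

end

lemma PQRS_exists:
  assumes adm: "admissible n A B"
  defines "rA \<equiv> vec_space.rank n A" and "rB \<equiv> vec_space.rank n B"
  defines "m \<equiv> rA + rB - n" and "a \<equiv> n - rA" and "b \<equiv> n - rB"
  shows "rA + rB \<ge> n" "\<exists>p. p permutes {..<n} \<and>
     (\<exists>P Q R S. PQRS_ok m a b P Q R S \<and> PQRS_equiv n A B p m a b P Q R S)"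
proof -
  obtain J1 J2 J3 C where ranks: "rA + rB \<ge> n" "rA \<le> n" "rB \<le> n"
    and part: "J1 \<union> J2 \<union> J3 = {..<n}" "J1 \<inter> J2 = {}" "J1 \<inter> J3 = {}" "J2 \<inter> J3 = {}"
    and cards: "card J1 = m" "card J2 = a" "card J3 = b"
    and C: "C \<in> carrier_mat n n" "\<And>v. v \<in> carrier_vec n \<Longrightarrow> C *\<^sub>v v = 0\<^sub>v n \<Longrightarrow> v = 0\<^sub>v n"
    and units: "\<forall>x<n. \<forall>k\<in>J1 \<union> J2. (C * B) $$ (x,k) = (if x = k then 1 else 0)"
      "\<forall>x<n. \<forall>k\<in>J3. (C * A) $$ (x,k) = (if x = k then 1 else 0)"
    and bases: "spans_cols B (J1 \<union> J2)" "indep_cols A (J1 \<union> J3)" "spans_cols A (J1 \<union> J3)"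
    using normalizing_transformation[OF adm] unfolding m_def a_def b_def rA_def rB_def by blast
  have nsum: "n = m + a + b" unfolding m_def a_def b_def using ranks by simp
  have "J1 \<union> J2 \<union> J3 = {..<m+a+b}" using part(1) nsum by simp
  then obtain p where p: "p permutes {..<m+a+b}" "bij_betw p {..<m} J1"
    "bij_betw (\<lambda>k. p (m+k)) {..<a} J2" "bij_betw (\<lambda>k. p (m+a+k)) {..<b} J3"
    using block_permutation[OF _ part(2-4) cards] by blast
  have p_perm: "p permutes {..<n}" using p(1) nsum by simp
  interpret coupling_normalisation n m a b A B C J1 J2 J3 p
    by unfold_locales (use adm nsum C units bases p_perm p(2-4) in auto)
  show "rA + rB \<ge> n" by (fact ranks(1))
  show "\<exists>p. p permutes {..<n} \<and> (\<exists>P Q R S. PQRS_ok m a b P Q R S \<and> PQRS_equiv n A B p m a b P Q R S)"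
    using p_perm PQRS_read_off by blast
qed

section \<open>Uniqueness of the PQRS data\<close>

abbreviation PQRS_cond :: "nat \<Rightarrow> nat \<Rightarrow> nat \<Rightarrow> complex mat \<Rightarrow> complex mat \<Rightarrow> complex mat \<Rightarrow> complex mat
    \<Rightarrow> complex vec \<Rightarrow> complex vec \<Rightarrow> bool" where
  "PQRS_cond m a b P Q R S u u' \<equiv> B_PQRS m a b P Q R *\<^sub>v u' = A_PQRS m a b P Q R S *\<^sub>v u"

lemma all_less_blocks:
  fixes m a b :: nat
  shows "(\<forall>x<m+a+b. \<phi> x) \<longleftrightarrow> (\<forall>i<m. \<phi> i) \<and> (\<forall>i<a. \<phi> (m+i)) \<and> (\<forall>i<b. \<phi> (m+a+i))"
proof (intro iffI conjI allI impI)
  assume H: "(\<forall>i<m. \<phi> i) \<and> (\<forall>i<a. \<phi> (m+i)) \<and> (\<forall>i<b. \<phi> (m+a+i))"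
  fix x :: nat assume x: "x < m+a+b"
  consider "x < m" | "m \<le> x" "x < m+a" | "m+a \<le> x"by linarith
  thus "\<phi> x"
  proof cases
    case 2 thus ?thesis using H[THEN conjunct2, THEN conjunct1, rule_format, of "x-m"] by simp
  next
    case 3 thus ?thesis using H[THEN conjunct2, THEN conjunct2, rule_format, of "x-m-a"] x by simp
  qed (use H in simp)
qed auto

lemma row_split:
  assumes M: "M \<in> carrier_mat (m+a+b) (m+a+b)" and v: "v \<in> carrier_vec (m+a+b)" and x: "x < m+a+b"
  shows "(M *\<^sub>v v) $ x = (\<Sum>j<m. M $$ (x,j) * v $ j) + (\<Sum>k<a. M $$ (x,m+k) * v $ (m+k))
     + (\<Sum>k<b. M $$ (x,m+a+k) * v $ (m+a+k))"
  unfolding mat_vec_index[OF M v x] sum_lessThan_add by (simp add: add.assoc)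

context
  fixes m a b :: nat and P Q R S :: "complex mat"
  assumes P: "P \<in> carrier_mat m b" and Q: "Q \<in> carrier_mat a b" and R: "R \<in> carrier_mat a m"
    and S: "S \<in> carrier_mat m m"
begin

lemma B_PQRS_carrier: "B_PQRS m a b P Q R \<in> carrier_mat (m+a+b) (m+a+b)"
  unfolding B_PQRS_def block3_def by simp

lemma A_PQRS_carrier: "A_PQRS m a b P Q R S \<in> carrier_mat (m+a+b) (m+a+b)"
  unfolding A_PQRS_def block3_def by simp

lemma PQRS_top_rows:
  assumes u: "u \<in> carrier_vec (m+a+b)" and u': "u' \<in> carrier_vec (m+a+b)" and i: "i < m"
  shows "(B_PQRS m a b P Q R *\<^sub>v u') $ i = u' $ i + (\<Sum>k<b. P $$ (i,k) * u' $ (m+a+k))"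
    "(A_PQRS m a b P Q R S *\<^sub>v u) $ i
       = (\<Sum>k<m. S $$ (i,k) * u $ k) - (\<Sum>k<a. (\<Sum>l<m. S $$ (i,l) * cnj (R $$ (k,l))) * u $ (m+k))"
proof -
  note Bi = B_PQRS_index[OF _ _ P Q R] and Ai = A_PQRS_index[OF _ _ P Q R S]
  have xi: "i < m+a+b" using i by simp
  have "(\<Sum>j<m. B_PQRS m a b P Q R $$ (i,j) * u' $ j) = (\<Sum>j<m. u' $ j * (if i = j then 1 else 0))"
    using i by (intro sum.cong refl) (simp add: Bi)
  also have "\<dots> = u' $ i" using i by (simp add: sum_delta_mult')
  finally have s1: "(\<Sum>j<m. B_PQRS m a b P Q R $$ (i,j) * u' $ j) = u' $ i" .
  have s2: "(\<Sum>k<a. B_PQRS m a b P Q R $$ (i,m+k) * u' $ (m+k)) = 0"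
    using i by (intro sum.neutral) (simp add: Bi)
  have s3: "(\<Sum>k<b. B_PQRS m a b P Q R $$ (i,m+a+k) * u' $ (m+a+k)) = (\<Sum>k<b. P $$ (i,k) * u' $ (m+a+k))"
    using i by (intro sum.cong refl) (simp add: Bi)
  show "(B_PQRS m a b P Q R *\<^sub>v u') $ i = u' $ i + (\<Sum>k<b. P $$ (i,k) * u' $ (m+a+k))"
    unfolding row_split[OF B_PQRS_carrier u' xi] s1 s2 s3 by simp
  have t1: "(\<Sum>j<m. A_PQRS m a b P Q R S $$ (i,j) * u $ j) = (\<Sum>k<m. S $$ (i,k) * u $ k)"
    using i by (intro sum.cong refl) (simp add: Ai)
  have "(\<Sum>k<a. A_PQRS m a b P Q R S $$ (i,m+k) * u $ (m+k))
      = (\<Sum>k<a. - ((\<Sum>l<m. S $$ (i,l) * cnj (R $$ (k,l))) * u $ (m+k)))"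
    using i by (intro sum.cong refl) (simp add: Ai)
  hence t2: "(\<Sum>k<a. A_PQRS m a b P Q R S $$ (i,m+k) * u $ (m+k))
      = - (\<Sum>k<a. (\<Sum>l<m. S $$ (i,l) * cnj (R $$ (k,l))) * u $ (m+k))"
    by (simp add: sum_negf)
  have t3: "(\<Sum>k<b. A_PQRS m a b P Q R S $$ (i,m+a+k) * u $ (m+a+k)) = 0"
    using i by (intro sum.neutral) (simp add: Ai)
  show "(A_PQRS m a b P Q R S *\<^sub>v u) $ i
      = (\<Sum>k<m. S $$ (i,k) * u $ k) - (\<Sum>k<a. (\<Sum>l<m. S $$ (i,l) * cnj (R $$ (k,l))) * u $ (m+k))"
    unfolding row_split[OF A_PQRS_carrier u xi] t1 t2 t3 by simp
qed

lemma PQRS_middle_rows: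
  assumes u: "u \<in> carrier_vec (m+a+b)" and u': "u' \<in> carrier_vec (m+a+b)" and i: "i < a"
  shows "(B_PQRS m a b P Q R *\<^sub>v u') $ (m+i)
      = (\<Sum>k<m. R $$ (i,k) * u' $ k) + u' $ (m+i) + (\<Sum>k<b. Q $$ (i,k) * u' $ (m+a+k))"
    "(A_PQRS m a b P Q R S *\<^sub>v u) $ (m+i) = 0"
proof -
  note Bi = B_PQRS_index[OF _ _ P Q R] and Ai = A_PQRS_index[OF _ _ P Q R S]
  have xi: "m+i < m+a+b" using i by simp
  have s1: "(\<Sum>j<m. B_PQRS m a b P Q R $$ (m+i,j) * u' $ j) = (\<Sum>k<m. R $$ (i,k) * u' $ k)"
    using i by (intro sum.cong refl) (simp add: Bi)
  have "(\<Sum>k<a. B_PQRS m a b P Q R $$ (m+i,m+k) * u' $ (m+k)) = (\<Sum>k<a. u' $ (m+k) * (if i = k then 1 else 0))"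
    using i by (intro sum.cong refl) (simp add: Bi)
  also have "\<dots> = u' $ (m+i)" using i by (simp add: sum_delta_mult')
  finally have s2: "(\<Sum>k<a. B_PQRS m a b P Q R $$ (m+i,m+k) * u' $ (m+k)) = u' $ (m+i)" .
  have s3: "(\<Sum>k<b. B_PQRS m a b P Q R $$ (m+i,m+a+k) * u' $ (m+a+k)) = (\<Sum>k<b. Q $$ (i,k) * u' $ (m+a+k))"
    using i by (intro sum.cong refl) (simp add: Bi)
  show "(B_PQRS m a b P Q R *\<^sub>v u') $ (m+i)
      = (\<Sum>k<m. R $$ (i,k) * u' $ k) + u' $ (m+i) + (\<Sum>k<b. Q $$ (i,k) * u' $ (m+a+k))"
    unfolding row_split[OF B_PQRS_carrier u' xi] s1 s2 s3 ..
  show "(A_PQRS m a b P Q R S *\<^sub>v u) $ (m+i) = 0"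
    unfolding row_split[OF A_PQRS_carrier u xi] using i by (simp add: Ai)
qed

lemma PQRS_bottom_rows:
  assumes u: "u \<in> carrier_vec (m+a+b)" and u': "u' \<in> carrier_vec (m+a+b)" and i: "i < b"
  shows "(B_PQRS m a b P Q R *\<^sub>v u') $ (m+a+i) = 0"
    "(A_PQRS m a b P Q R S *\<^sub>v u) $ (m+a+i) = - (\<Sum>k<m. cnj (P $$ (k,i)) * u $ k)
        + (\<Sum>k<a. cnj ((\<Sum>l<m. R $$ (k,l) * P $$ (l,i)) - Q $$ (k,i)) * u $ (m+k)) + u $ (m+a+i)"
proof -
  note Bi = B_PQRS_index[OF _ _ P Q R] and Ai = A_PQRS_index[OF _ _ P Q R S]
  have xi: "m+a+i < m+a+b" using i by simp
  show "(B_PQRS m a b P Q R *\<^sub>v u') $ (m+a+i) = 0"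
    unfolding row_split[OF B_PQRS_carrier u' xi] using i by (simp add: Bi)
  have t1: "(\<Sum>j<m. A_PQRS m a b P Q R S $$ (m+a+i,j) * u $ j) = - (\<Sum>k<m. cnj (P $$ (k,i)) * u $ k)"
    using i by (simp add: Ai sum_negf[symmetric])
  have t2: "(\<Sum>k<a. A_PQRS m a b P Q R S $$ (m+a+i,m+k) * u $ (m+k))
      = (\<Sum>k<a. cnj ((\<Sum>l<m. R $$ (k,l) * P $$ (l,i)) - Q $$ (k,i)) * u $ (m+k))"
    using i by (intro sum.cong refl) (simp add: Ai)
  have "(\<Sum>k<b. A_PQRS m a b P Q R S $$ (m+a+i,m+a+k) * u $ (m+a+k))
      = (\<Sum>k<b. u $ (m+a+k) * (if i = k then 1 else 0))"
    using i by (intro sum.cong refl) (simp add: Ai)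
  also have "\<dots> = u $ (m+a+i)" using i by (simp add: sum_delta_mult')
  finally have t3: "(\<Sum>k<b. A_PQRS m a b P Q R S $$ (m+a+i,m+a+k) * u $ (m+a+k)) = u $ (m+a+i)" .
  show "(A_PQRS m a b P Q R S *\<^sub>v u) $ (m+a+i) = - (\<Sum>k<m. cnj (P $$ (k,i)) * u $ k)
      + (\<Sum>k<a. cnj ((\<Sum>l<m. R $$ (k,l) * P $$ (l,i)) - Q $$ (k,i)) * u $ (m+k)) + u $ (m+a+i)"
    unfolding row_split[OF A_PQRS_carrier u xi] t1 t2 t3 ..
qed

lemma PQRS_cond_blocks:
  assumes u: "u \<in> carrier_vec (m+a+b)" and u': "u' \<in> carrier_vec (m+a+b)"
  shows "PQRS_cond m a b P Q R S u u' \<longleftrightarrow>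
   (\<forall>i<m. u' $ i + (\<Sum>k<b. P $$ (i,k) * u' $ (m+a+k)) =
       (\<Sum>k<m. S $$ (i,k) * u $ k) - (\<Sum>k<a. (\<Sum>l<m. S $$ (i,l) * cnj (R $$ (k,l))) * u $ (m+k))) \<and>
   (\<forall>i<a. (\<Sum>k<m. R $$ (i,k) * u' $ k) + u' $ (m+i) + (\<Sum>k<b. Q $$ (i,k) * u' $ (m+a+k)) = 0) \<and>
   (\<forall>i<b. 0 = - (\<Sum>k<m. cnj (P $$ (k,i)) * u $ k)
        + (\<Sum>k<a. cnj ((\<Sum>l<m. R $$ (k,l) * P $$ (l,i)) - Q $$ (k,i)) * u $ (m+k)) + u $ (m+a+i))"
    (is "_ \<longleftrightarrow> ?blocks")
proof -
  have "PQRS_cond m a b P Q R S u u' \<longleftrightarrow>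
      (\<forall>x<m+a+b. (B_PQRS m a b P Q R *\<^sub>v u') $ x = (A_PQRS m a b P Q R S *\<^sub>v u) $ x)"
    using B_PQRS_carrier A_PQRS_carrier by (auto simp: vec_eq_iff)
  also have "\<dots> \<longleftrightarrow> ?blocks" unfolding all_less_blocks
    using PQRS_top_rows[OF u u'] PQRS_middle_rows[OF u u'] PQRS_bottom_rows[OF u u'] by simp
  finally show ?thesis .
qed

end

text \<open>Evaluating on
  test vectors: for j in the first block, u = e_j + (conj of row j of P in the last
  block) and u' = (S e_j, - R S e_j, 0) solve the first system, and the second system
  then yields S = S', P = P' and R' S = R S, hence R' = R as S is invertible; for j in
  the last block, u = 0 and u' = (- P e_j, (R P - Q) e_j, e_j) yield Q = Q'.\<close>

context
  fixes m a b :: nat and P Q R S P' Q' R' S' :: "complex mat"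
  assumes ok1: "PQRS_ok m a b P Q R S" and ok2: "PQRS_ok m a b P' Q' R' S'"
    and same: "\<And>u u'. u \<in> carrier_vec (m+a+b) \<Longrightarrow> u' \<in> carrier_vec (m+a+b) \<Longrightarrow>
       PQRS_cond m a b P Q R S u u' \<longleftrightarrow> PQRS_cond m a b P' Q' R' S' u u'"
begin

lemma carriers1: "P \<in> carrier_mat m b" "Q \<in> carrier_mat a b" "R \<in> carrier_mat a m" "S \<in> carrier_mat m m"
  and carriers2: "P' \<in> carrier_mat m b" "Q' \<in> carrier_mat a b" "R' \<in> carrier_mat a m" "S' \<in> carrier_mat m m"
  using ok1 ok2 unfolding PQRS_ok_def by auto

lemma first_block_test:
  assumes j: "j < m"
  shows "(\<forall>i<m. S $$ (i,j) = S' $$ (i,j)) \<and> (\<forall>k<b. P $$ (j,k) = P' $$ (j,k)) \<and>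
     (\<forall>i<a. (\<Sum>l<m. R' $$ (i,l) * S $$ (l,j)) = (\<Sum>l<m. R $$ (i,l) * S $$ (l,j)))"
proof -
  let ?n = "m+a+b"
  define u :: "complex vec" where
    "u = vec ?n (\<lambda>x. if x < m then (if x = j then 1 else 0) else if x < m+a then 0 else cnj (P $$ (j,x-m-a)))"
  define u' :: "complex vec" where
    "u' = vec ?n (\<lambda>x. if x < m then S $$ (x,j) else if x < m+a then - (\<Sum>l<m. R $$ (x-m,l) * S $$ (l,j)) else 0)"
  have u: "u \<in> carrier_vec ?n" and u': "u' \<in> carrier_vec ?n" unfolding u_def u'_def by auto
  have ua: "u $ x = (if x = j then 1 else 0)" if "x < m" for x using that unfolding u_def by simp
  have ub: "u $ (m+x) = 0" if "x < a" for x using that unfolding u_def by simp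
  have uc: "u $ (m+a+x) = cnj (P $$ (j,x))" if "x < b" for x using that unfolding u_def by simp
  have u'a: "u' $ x = S $$ (x,j)" if "x < m" for x using that unfolding u'_def by simp
  have u'b: "u' $ (m+x) = - (\<Sum>l<m. R $$ (x,l) * S $$ (l,j))" if "x < a" for x using that unfolding u'_def by simp
  have u'c: "u' $ (m+a+x) = 0" if "x < b" for x using that unfolding u'_def by simp
  have "PQRS_cond m a b P Q R S u u'"
    unfolding PQRS_cond_blocks[OF carriers1 u u'] using j by (simp add: ua ub uc u'a u'b u'c sum_delta_mult)
  hence "PQRS_cond m a b P' Q' R' S' u u'" using same[OF u u'] by simp
  hence c1: "\<forall>i<m. u' $ i + (\<Sum>k<b. P' $$ (i,k) * u' $ (m+a+k)) =
       (\<Sum>k<m. S' $$ (i,k) * u $ k) - (\<Sum>k<a. (\<Sum>l<m. S' $$ (i,l) * cnj (R' $$ (k,l))) * u $ (m+k))"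
    and c2: "\<forall>i<a. (\<Sum>k<m. R' $$ (i,k) * u' $ k) + u' $ (m+i) + (\<Sum>k<b. Q' $$ (i,k) * u' $ (m+a+k)) = 0"
    and c3: "\<forall>i<b. 0 = - (\<Sum>k<m. cnj (P' $$ (k,i)) * u $ k)
        + (\<Sum>k<a. cnj ((\<Sum>l<m. R' $$ (k,l) * P' $$ (l,i)) - Q' $$ (k,i)) * u $ (m+k)) + u $ (m+a+i)"
    unfolding PQRS_cond_blocks[OF carriers2 u u'] by auto
  have "S $$ (i,j) = S' $$ (i,j)" if i: "i < m" for i
    using c1[rule_format, OF i] i j by (simp add: ua ub uc u'a u'b u'c sum_delta_mult)
  moreover have "P $$ (j,k) = P' $$ (j,k)" if k: "k < b" for k
    using c3[rule_format, OF k] k j by (simp add: ua ub uc u'a u'b u'c sum_delta_mult)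
  moreover have "(\<Sum>l<m. R' $$ (i,l) * S $$ (l,j)) = (\<Sum>l<m. R $$ (i,l) * S $$ (l,j))" if i: "i < a" for i
    using c2[rule_format, OF i] i j by (simp add: ua ub uc u'a u'b u'c sum_delta_mult)
  ultimately show ?thesis by blast
qed

lemma same_S_P_R: "S = S'" "P = P'" "R = R'"
proof -
  note c1 = carriers1 and c2 = carriers2
  show "S = S'" by (rule eq_matI) (use c1 c2 first_block_test in auto)
  show "P = P'" by (rule eq_matI) (use c1 c2 first_block_test in auto)
  have RS: "R' * S = R * S"
  proof (rule eq_matI)
    fix i j assume "i < dim_row (R * S)" "j < dim_col (R * S)"
    hence i: "i < a" and j: "j < m" using c1 by auto
    show "(R' * S) $$ (i,j) = (R * S) $$ (i,j)"
      unfolding mat_mult_index[OF c2(3) c1(4) i j] mat_mult_index[OF c1(3) c1(4) i j]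
      using first_block_test[OF j] i by blast
  qed (use c1 c2 in auto)
  obtain T where T: "S * T = 1\<^sub>m m" "T * S = 1\<^sub>m (dim_row T)"
    using ok1 c1(4) unfolding PQRS_ok_def invertible_mat_def inverts_mat_def by auto
  have Tc: "T \<in> carrier_mat m m"
    using arg_cong[OF T(1), of dim_col] arg_cong[OF T(2), of dim_col] c1(4) by auto
  have "R' = (R' * S) * T" using c2(3) c1(4) Tc T(1) by (simp add: assoc_mult_mat[of _ a m _ m _ m])
  also have "\<dots> = R" using c1(3,4) Tc T(1) unfolding RS by (simp add: assoc_mult_mat[of _ a m _ m _ m])
  finally show "R = R'" by simp
qed

lemma last_block_test:
  assumes j: "j < b" and i: "i < a"
  shows "Q $$ (i,j) = Q' $$ (i,j)"
proof -
  let ?n = "m+a+b"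
  define u' :: "complex vec" where "u' = vec ?n (\<lambda>x. if x < m then - P $$ (x,j) else if x < m+a
      then (\<Sum>l<m. R $$ (x-m,l) * P $$ (l,j)) - Q $$ (x-m,j) else (if x = m+a+j then 1 else 0))"
  have u0: "0\<^sub>v ?n \<in> carrier_vec ?n" and u': "u' \<in> carrier_vec ?n" unfolding u'_def by auto
  have u'a: "u' $ x = - P $$ (x,j)" if "x < m" for x using that unfolding u'_def by simp
  have u'b: "u' $ (m+x) = (\<Sum>l<m. R $$ (x,l) * P $$ (l,j)) - Q $$ (x,j)" if "x < a" for x
    using that unfolding u'_def by simp
  have u'c: "u' $ (m+a+x) = (if x = j then 1 else 0)" if "x < b" for x using that unfolding u'_def by auto
  have "PQRS_cond m a b P Q R S (0\<^sub>v ?n) u'"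
    unfolding PQRS_cond_blocks[OF carriers1 u0 u'] using j
    by (simp add: u'a u'b u'c sum_delta_mult sum_delta_mult' sum_negf)
  hence "PQRS_cond m a b P' Q' R' S' (0\<^sub>v ?n) u'" using same[OF u0 u'] by simp
  hence "\<forall>i<a. (\<Sum>k<m. R' $$ (i,k) * u' $ k) + u' $ (m+i) + (\<Sum>k<b. Q' $$ (i,k) * u' $ (m+a+k)) = 0"
    unfolding PQRS_cond_blocks[OF carriers2 u0 u'] by auto
  thus ?thesis using i j unfolding same_S_P_R(3)[symmetric]
    by (simp add: u'a u'b u'c sum_delta_mult sum_delta_mult' sum_negf)
qed

lemma PQRS_data_unique: "P = P' \<and> Q = Q' \<and> R = R' \<and> S = S'"
proof -
  have "Q = Q'" by (rule eq_matI) (use carriers1 carriers2 last_block_test in auto)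
  thus ?thesis using same_S_P_R by simp
qed

end

lemma perm_vec_surj:
  assumes p: "p permutes {..<n}" and u: "u \<in> carrier_vec n"
  obtains \<Psi> where "\<Psi> \<in> carrier_vec n" "perm_vec p \<Psi> = u"
proof
  let ?\<Psi> = "vec n (\<lambda>i. u $ inv_into UNIV p i)"
  show "?\<Psi> \<in> carrier_vec n" by simp
  show "perm_vec p ?\<Psi> = u"
  proof (rule eq_vecI)
    fix i assume "i < dim_vec u"
    hence i: "i < n" using u by simp
    have "p i < n" using permutes_in_image[OF p, of i] i by simp
    thus "perm_vec p ?\<Psi> $ i = u $ i"
      unfolding perm_vec_def using i permutes_inverses(2)[OF p, of i] by simp
  qed (use u in \<open>simp add: perm_vec_def\<close>)
qed

lemma PQRS_unique:
  assumes p: "p permutes {..<n}" and nsum: "m + a + b = n"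
    and ok1: "PQRS_ok m a b P Q R S" and eq1: "PQRS_equiv n A B p m a b P Q R S"
    and ok2: "PQRS_ok m a b P' Q' R' S'" and eq2: "PQRS_equiv n A B p m a b P' Q' R' S'"
  shows "P = P' \<and> Q = Q' \<and> R = R' \<and> S = S'"
proof (rule PQRS_data_unique[OF ok1 ok2])
  fix u u' :: "complex vec" assume "u \<in> carrier_vec (m+a+b)" and "u' \<in> carrier_vec (m+a+b)"
  then obtain \<Psi> \<Psi>' where \<Psi>: "\<Psi> \<in> carrier_vec n" "perm_vec p \<Psi> = u"
    and \<Psi>': "\<Psi>' \<in> carrier_vec n" "perm_vec p \<Psi>' = u'"
    using perm_vec_surj[OF p] nsum by metis
  show "PQRS_cond m a b P Q R S u u' \<longleftrightarrow> PQRS_cond m a b P' Q' R' S' u u'"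
    using eq1 eq2 \<Psi> \<Psi>' unfolding PQRS_equiv_def by blast
qed

theorem theorem1:
  fixes n :: nat and A B :: "complex mat"
  assumes adm: "admissible n A B"
  shows "vec_space.rank n A + vec_space.rank n B \<ge> n \<and>
    (let rA = vec_space.rank n A; rB = vec_space.rank n B;
         m = rA + rB - n; a = n - rA; b = n - rB in
      (\<exists>p. p permutes {..<n} \<and>
         (\<exists>P Q R S. PQRS_ok m a b P Q R S \<and> PQRS_equiv n A B p m a b P Q R S)) \<and>
      (\<forall>p P Q R S P' Q' R' S'. p permutes {..<n} \<longrightarrow>
         PQRS_ok m a b P Q R S \<longrightarrow> PQRS_equiv n A B p m a b P Q R S \<longrightarrow>
         PQRS_ok m a b P' Q' R' S' \<longrightarrow> PQRS_equiv n A B p m a b P' Q' R' S' \<longrightarrow>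
         P = P' \<and> Q = Q' \<and> R = R' \<and> S = S'))"
proof -
  have A: "A \<in> carrier_mat n n" and B: "B \<in> carrier_mat n n" using adm unfolding admissible_def by auto
  note ranks = PQRS_exists[OF adm]
  have "vec_space.rank n A \<le> n" "vec_space.rank n B \<le> n"
    using vec_space.rank_le_nc[OF A] vec_space.rank_le_nc[OF B] .
  hence nsum: "(vec_space.rank n A + vec_space.rank n B - n) + (n - vec_space.rank n A)
      + (n - vec_space.rank n B) = n" using ranks(1) by simp
  show ?thesis unfolding Let_def using ranks PQRS_unique[OF _ nsum] by blast
qed

end
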